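(* Let $p>6$ and assume $h$ satisfies $(h_1)$. Let $u\in H^{s,2}$ with $u^+\neq0$, $u^-\neq0$, $\langle J_{s,2}'(u),u^+\rangle\le0$ and $\langle J_{s,2}'(u),u^-\rangle\le0$. Then the unique pair $(r_u,t_u)\in(0,\infty)^2$ with $r_uu^++t_uu^-\in\mathcal{M}_{s,2}$ satisfies $r_u,t_u\in(0,1]$.
   Context: Let $d\ge 1$ and $s\in(0,1)$. $\mathbb{Z}^d$ is the integer lattice graph (vertices $\mathbb{Z}^d$, edges between $x,y$ with $\sum_i|x_i-y_i|=1$), with graph distance $|x-y|=\sum_{i=1}^d|x_i-y_i|$ and counting measure $\mu$; $\int_{\mathbb{Z}^d}f\,d\mu:=\sum_{x\in\mathbb{Z}^d}f(x)$. The weight $w_s(x,y)$, defined for $x\neq y$, is symmetric, positive, and satisfies $c_{s,d}|x-y|^{-d-2s}\le w_s(x,y)\le C_{s,d}|x-y|^{-d-2s}$ for some constants $0<c_{s,d}\le C_{s,d}$. For $u,v:\mathbb{Z}^d\to\mathbb{R}$ set $\nabla^s u\nabla^s v(x)=\frac12\sum_{y\neq x}w_s(x,y)(u(x)-u(y))(v(x)-v(y))$, $|\nabla^s u|^2(x)=\nabla^s u\nabla^s u(x)$, $\|\nabla^s u\|_2^2:=\int_{\mathbb{Z}^d}|\nabla^s u|^2d\mu$, and $(-\Delta)^s u(x)=\sum_{y\neq x}w_s(x,y)(u(x)-u(y))$; $\|u\|_q$ denotes the $\ell^q(\mathbb{Z}^d)$ norm. Fix constants $a,b>0$ and $p>2$.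 The potential $h:\mathbb{Z}^d\to\mathbb{R}$ may satisfy: $(h_1)$ there is $h_0>0$ with $h(x)\ge h_0$ for all $x$; $(h_2)$ there is $x_0\in\mathbb{Z}^d$ with $h(x)\to\infty$ as $|x-x_0|\to\infty$. $W^{s,2}(\mathbb{Z}^d)$ is the completion of finitely supported functions under $\|u\|_{W^{s,2}}^2=\int(|\nabla^s u|^2+u^2)d\mu$, and $H^{s,2}=\{u\in W^{s,2}:\int h u^2d\mu<\infty\}$ is the Hilbert space with inner product $\langle u,v\rangle_{H^{s,2}}=\int(a\nabla^s u\nabla^s v+huv)d\mu$ and norm $\|u\|_{H^{s,2}}$. Equation (E) is $\left(a+b\int_{\mathbb{Z}^d}|\nabla^s u|^2d\mu\right)(-\Delta)^s u+h(x)u=|u|^{p-2}u\log u^2$ on $\mathbb{Z}^d$ (with $|t|^{p-2}t\log t^2:=0$ at $t=0$). The energy is $J_{s,2}(u)=\frac12\|u\|_{H^{s,2}}^2+\frac b4\|\nabla^s u\|_2^4+\frac{2}{p^2}\int|u|^pd\mu-\frac1p\int|u|^p\log u^2d\mu$, a $C^1$ functional on $H^{s,2}$ with $\langle J_{s,2}'(u),\phi\rangle=\int(a\nabla^s u\nabla^s\phi+hu\phi)d\mu+b\|\nabla^s u\|_2^2\int\nabla^s u\nabla^s\phi\,d\mu-\int|u|^{p-2}u\phi\log u^2d\mu$. A weak solution is a critical point of $J_{s,2}$; nontrivial means $\neq0$. $u^+=\max\{u,0\}$, $u^-=\min\{u,0\}$. Nehari manifold: $\mathcal{N}_{s,2}=\{v\in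 H^{s,2}\setminus\{0\}:\langle J_{s,2}'(v),v\rangle=0\}$. Sign-changing Nehari set: $\mathcal{M}_{s,2}=\{v\in H^{s,2}: v^\pm\neq0,\ \langle J_{s,2}'(v),v^+\rangle=\langle J_{s,2}'(v),v^-\rangle=0\}$. A ground state solution is a nontrivial weak solution $u$ with $J_{s,2}(u)=\inf_{\mathcal{N}_{s,2}}J_{s,2}$; a sign-changing solution is a weak solution $u$ with $u^\pm\not\equiv0$; a ground state sign-changing solution is a sign-changing solution $u$ with $J_{s,2}(u)=\inf_{\mathcal{M}_{s,2}}J_{s,2}$. For $u\in H^{s,2}$, $K(u)=\sum_{x}\sum_{y\neq x}w_s(x,y)[u^+(y)u^-(x)+u^-(y)u^+(x)]$. *)

theory Defs
  imports "HOL-Analysis.Analysis"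
begin

text \<open>Lattice points of Z^d are functions from a finite index type 'd to int;
  the dimension is d = CARD('d).\<close>

definition ldist :: "('d::finite \<Rightarrow> int) \<Rightarrow> ('d \<Rightarrow> int) \<Rightarrow> real" where
  "ldist x y = (\<Sum>i\<in>UNIV. real_of_int \<bar>x i - y i\<bar>)"

definition admissible_weight ::
  "real \<Rightarrow> (('d::finite \<Rightarrow> int) \<Rightarrow> ('d \<Rightarrow> int) \<Rightarrow> real) \<Rightarrow> bool" where
  "admissible_weight s w \<longleftrightarrow>
     (\<forall>x y. x \<noteq> y \<longrightarrow> w x y = w y x \<and> 0 < w x y) \<and>
     (\<exists>c C. 0 < c \<and> c \<le> C \<and>
        (\<forall>x y. x \<noteq> y \<longrightarrow>
           c * ldist x y powr (- (real CARD('d) + 2 * s)) \<le> w x y \<and>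
           w x y \<le> C * ldist x y powr (- (real CARD('d) + 2 * s))))"

definition grad_prod ::
  "(('d::finite \<Rightarrow> int) \<Rightarrow> ('d \<Rightarrow> int) \<Rightarrow> real) \<Rightarrow> (('d \<Rightarrow> int) \<Rightarrow> real)
     \<Rightarrow> (('d \<Rightarrow> int) \<Rightarrow> real) \<Rightarrow> ('d \<Rightarrow> int) \<Rightarrow> real" where
  "grad_prod w u v x = (1/2) * (\<Sum>\<^sub>\<infinity>y\<in>UNIV - {x}. w x y * (u x - u y) * (v x - v y))"

definition grad_norm_sq ::
  "(('d::finite \<Rightarrow> int) \<Rightarrow> ('d \<Rightarrow> int) \<Rightarrow> real) \<Rightarrow> (('d \<Rightarrow> int) \<Rightarrow> real) \<Rightarrow> real" where
  "grad_norm_sq w u = (\<Sum>\<^sub>\<infinity>x. grad_prod w u u x)"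

definition W_norm_sq ::
  "(('d::finite \<Rightarrow> int) \<Rightarrow> ('d \<Rightarrow> int) \<Rightarrow> real) \<Rightarrow> (('d \<Rightarrow> int) \<Rightarrow> real) \<Rightarrow> real" where
  "W_norm_sq w u = (\<Sum>\<^sub>\<infinity>x. grad_prod w u u x + (u x)\<^sup>2)"

text \<open>W^{s,2}: functions of finite W-norm that are W-norm limits of finitely supported
  functions (the completion, realised as a space of functions on Z^d).\<close>
definition W_space ::
  "(('d::finite \<Rightarrow> int) \<Rightarrow> ('d \<Rightarrow> int) \<Rightarrow> real) \<Rightarrow> (('d \<Rightarrow> int) \<Rightarrow> real) set" where
  "W_space w = {u. (\<lambda>x. grad_prod w u u x) summable_on UNIV \<and>
                   (\<lambda>x. (u x)\<^sup>2) summable_on UNIV \<and>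
                   (\<exists>\<phi>::nat \<Rightarrow> ('d \<Rightarrow> int) \<Rightarrow> real.
                      (\<forall>n. finite {x. \<phi> n x \<noteq> 0}) \<and>
                      (\<lambda>n. W_norm_sq w (\<lambda>x. u x - \<phi> n x)) \<longlonglongrightarrow> 0)}"

definition H_space ::
  "(('d::finite \<Rightarrow> int) \<Rightarrow> ('d \<Rightarrow> int) \<Rightarrow> real) \<Rightarrow> (('d \<Rightarrow> int) \<Rightarrow> real)
     \<Rightarrow> (('d \<Rightarrow> int) \<Rightarrow> real) set" where
  "H_space w h = {u \<in> W_space w. (\<lambda>x. h x * (u x)\<^sup>2) summable_on UNIV}"

definition logterm :: "real \<Rightarrow> real \<Rightarrow> real" where
  "logterm p t = (if t = 0 then 0 else \<bar>t\<bar> powr (p - 2) * t * ln (t\<^sup>2))"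

definition pos_part :: "('a \<Rightarrow> real) \<Rightarrow> 'a \<Rightarrow> real" where
  "pos_part u = (\<lambda>x. max (u x) 0)"

definition neg_part :: "('a \<Rightarrow> real) \<Rightarrow> 'a \<Rightarrow> real" where
  "neg_part u = (\<lambda>x. min (u x) 0)"

definition Jder ::
  "real \<Rightarrow> real \<Rightarrow> real \<Rightarrow> (('d::finite \<Rightarrow> int) \<Rightarrow> ('d \<Rightarrow> int) \<Rightarrow> real)
     \<Rightarrow> (('d \<Rightarrow> int) \<Rightarrow> real) \<Rightarrow> (('d \<Rightarrow> int) \<Rightarrow> real) \<Rightarrow> (('d \<Rightarrow> int) \<Rightarrow> real) \<Rightarrow> real" where
  "Jder a b p w h u \<phi> =
     (\<Sum>\<^sub>\<infinity>x. a * grad_prod w u \<phi> x + h x * u x * \<phi> x)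
     + b * grad_norm_sq w u * (\<Sum>\<^sub>\<infinity>x. grad_prod w u \<phi> x)
     - (\<Sum>\<^sub>\<infinity>x. logterm p (u x) * \<phi> x)"

definition M_set ::
  "real \<Rightarrow> real \<Rightarrow> real \<Rightarrow> (('d::finite \<Rightarrow> int) \<Rightarrow> ('d \<Rightarrow> int) \<Rightarrow> real)
     \<Rightarrow> (('d \<Rightarrow> int) \<Rightarrow> real) \<Rightarrow> (('d \<Rightarrow> int) \<Rightarrow> real) set" where
  "M_set a b p w h = {v \<in> H_space w h. pos_part v \<noteq> (\<lambda>_. 0) \<and> neg_part v \<noteq> (\<lambda>_. 0) \<and>
       Jder a b p w h v (pos_part v) = 0 \<and> Jder a b p w h v (neg_part v) = 0}"

end

theory Submission
  imports Defs
begin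

text \<open>Write \<open>v = r u\<^sup>+ + t u\<^sup>-\<close>. Since \<open>u\<^sup>+\<close> and \<open>u\<^sup>-\<close> have disjoint supports, the two
  conditions defining \<open>\<M>\<^sub>s\<^sub>,\<^sub>2\<close> become two scalar equations
  \<open>\<Phi>\<^sub>+(r, t) = 0\<close> and \<open>\<Phi>\<^sub>-(t, r) = 0\<close> with
  \<open>\<Phi>(r, t) = D(r, t) - r\<^sup>p (2 L ln r + G)\<close>, where \<open>D\<close> is a polynomial of degree 4 with
  nonnegative coefficients and positive \<open>r\<^sup>2\<close>-coefficient, and \<open>L > 0\<close>.
  A solution exists by Brouwer's fixed point theorem on a square \<open>[\<delta>, R]\<^sup>2\<close>, on whose sides
  the two functions have opposite signs. If \<open>(r\<^sub>0, t\<^sub>0)\<close> is a subsolution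
  (\<open>\<Phi>\<^sub>\<pm> \<le> 0\<close>) and \<open>(r, t)\<close> a solution with \<open>\<lambda> = max (r/r\<^sub>0) (t/t\<^sub>0) > 1\<close>, then in the
  equation where the maximum is attained \<open>D\<close> grows at most by \<open>\<lambda>\<^sup>4\<close> while the nonlinear
  term grows by \<open>\<lambda>\<^sup>p \<ge> \<lambda>\<^sup>4\<close> and its logarithm strictly increases, a contradiction. Hence
  \<open>r \<le> r\<^sub>0\<close>, \<open>t \<le> t\<^sub>0\<close>: with \<open>(r\<^sub>0, t\<^sub>0) = (1, 1)\<close> this is the bound, and applied to two
  solutions it is uniqueness (the reverse scaling argument with \<open>\<lambda> < 1\<close>).
  All series involved converge because an admissible weight is bounded and uniformly
  row-summable (\<open>d + 2s > d\<close>), so every square-summable \<open>u\<close> with \<open>\<Sum> h u\<^sup>2 < \<infinity>\<close> lies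
  in \<open>H\<^sup>s\<^sup>,\<^sup>2\<close>, and \<open>|t|\<^sup>p log t\<^sup>2 = O(t\<^sup>2)\<close> on bounded sets for \<open>p \<ge> 3\<close>.\<close>

section \<open>Row-summability of admissible weights\<close>

lemma summable_on_int_powr_decay:
  assumes "1 < \<beta>"
  shows "(\<lambda>k::int. (1 + real_of_int \<bar>k\<bar>) powr (-\<beta>)) summable_on UNIV"
proof -
  define \<phi> where "\<phi> = (\<lambda>k::int. (1 + real_of_int \<bar>k\<bar>) powr (-\<beta>))"
  have "summable (\<lambda>n. real n powr (-\<beta>))" using assms by (subst summable_real_powr_iff) auto
  hence "summable (\<lambda>n. real (Suc n) powr (-\<beta>))" by (subst summable_Suc_iff)
  hence nat_summable: "(\<lambda>n. (1 + real n) powr (-\<beta>)) summable_on UNIV"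
    by (intro summable_nonneg_imp_summable_on) auto
  have on_nonneg: "\<phi> summable_on (range int)"
    by (subst summable_on_reindex) (use nat_summable in \<open>auto simp: \<phi>_def o_def\<close>)
  have "(\<lambda>n. (2 + real n) powr (-\<beta>)) summable_on UNIV"
    by (rule summable_on_comparison_test[OF nat_summable]) (use assms in \<open>auto intro!: powr_mono2'\<close>)
  hence on_neg: "\<phi> summable_on (range (\<lambda>n. - int n - 1))"
    by (subst summable_on_reindex) (auto simp: inj_on_def \<phi>_def o_def add.commute)
  have "UNIV = range int \<union> range (\<lambda>n. - int n - 1)"
  proof safe
    fix k :: int assume k: "k \<notin> range (\<lambda>n. - int n - 1)"
    show "k \<in> range int"
    proof (cases "k \<ge> 0")
      case True thus ?thesis by (metis nat_0_le rangeI)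
    next
      case False
      hence "k = - int (nat (-k-1)) - 1" by simp
      with k show ?thesis by blast
    qed
  qed auto
  thus ?thesis unfolding \<phi>_def[symmetric] using summable_on_union[OF on_nonneg on_neg] by simp
qed

definition lattice_decay :: "real \<Rightarrow> ('d::finite \<Rightarrow> int) \<Rightarrow> real" where
  "lattice_decay \<beta> z = (\<Prod>i\<in>UNIV. (1 + real_of_int \<bar>z i\<bar>) powr (-\<beta>))"

lemma lattice_decay_nonneg: "0 \<le> lattice_decay \<beta> z"
  unfolding lattice_decay_def by (intro prod_nonneg) auto

lemma lattice_decay_summable:
  assumes "1 < \<beta>"
  shows "(lattice_decay \<beta> :: ('d::finite \<Rightarrow> int) \<Rightarrow> real) summable_on UNIV"
proof (rule ccontr)
  define \<phi> where "\<phi> = (\<lambda>k::int. (1 + real_of_int \<bar>k\<bar>) powr (-\<beta>))"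
  have \<phi>: "\<phi> summable_on UNIV" unfolding \<phi>_def by (rule summable_on_int_powr_decay[OF assms])
  have "sum \<phi> {0} \<le> infsum \<phi> UNIV"
    by (rule finite_sum_le_infsum[OF \<phi>]) (auto simp: \<phi>_def)
  hence one_le: "1 \<le> infsum \<phi> UNIV" by (simp add: \<phi>_def)
  \<comment> \<open>The product formula below holds unconditionally, while a divergent sum has value 0.\<close>
  have "infsum (\<lambda>g. \<Prod>x\<in>(UNIV::'d set). \<phi> (g x)) (PiE UNIV (\<lambda>_. UNIV))
      = (\<Prod>x\<in>(UNIV::'d set). infsum \<phi> UNIV)"
    by (rule infsum_prod_PiE_abs) (use \<phi> in \<open>auto simp: \<phi>_def\<close>)
  hence "infsum (lattice_decay \<beta> :: ('d \<Rightarrow> int) \<Rightarrow> real) UNIV = infsum \<phi> UNIV ^ CARD('d)"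
    by (simp add: lattice_decay_def[abs_def] \<phi>_def)
  moreover assume "\<not> (lattice_decay \<beta> :: ('d \<Rightarrow> int) \<Rightarrow> real) summable_on UNIV"
  ultimately show False using one_le by (simp add: infsum_not_exists)
qed

lemma ldist_ge_1:
  fixes x y :: "'d::finite \<Rightarrow> int"
  assumes "x \<noteq> y"
  shows "1 \<le> ldist x y"
proof -
  obtain i where i: "x i \<noteq> y i" using assms by auto
  have "1 \<le> real_of_int \<bar>x i - y i\<bar>" using i by simp
  also have "\<dots> \<le> ldist x y" unfolding ldist_def by (rule member_le_sum) auto
  finally show ?thesis .
qed

lemma ldist_powr_le_lattice_decay:
  fixes x y :: "'d::finite \<Rightarrow> int"
  assumes "x \<noteq> y" "0 < s"
  shows "ldist x y powr (- (real CARD('d) + 2 * s))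
          \<le> 2 powr (real CARD('d) + 2 * s) * lattice_decay (1 + 2 * s / real CARD('d)) (y - x)"
proof -
  define d where "d = real CARD('d)"
  define \<beta> where "\<beta> = 1 + 2 * s / d"
  define \<delta> where "\<delta> = ldist x y"
  have d: "d \<ge> 1" unfolding d_def by (simp add: Suc_le_eq)
  have \<beta>: "\<beta> \<ge> 0" "\<beta> * d = d + 2 * s" unfolding \<beta>_def using d assms by (simp_all add: field_simps)
  have \<delta>: "1 \<le> \<delta>" unfolding \<delta>_def by (rule ldist_ge_1[OF assms(1)])
  have coord: "1 + real_of_int \<bar>(y - x) i\<bar> \<le> 2 * \<delta>" for i
  proof -
    have "real_of_int \<bar>(y - x) i\<bar> = real_of_int \<bar>x i - y i\<bar>" by simp
    also have "\<dots> \<le> \<delta>" unfolding \<delta>_def ldist_def by (rule member_le_sum) auto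
    finally show ?thesis using \<delta> by simp
  qed
  have "(2 * \<delta>) powr (-\<beta> * d) = ((2 * \<delta>) powr (-\<beta>)) powr d" by (simp add: powr_powr)
  also have "\<dots> = ((2 * \<delta>) powr (-\<beta>)) ^ CARD('d)"
    unfolding d_def by (rule powr_realpow) (use \<delta> in simp)
  also have "\<dots> = (\<Prod>i\<in>(UNIV::'d set). (2 * \<delta>) powr (-\<beta>))" by simp
  also have "\<dots> \<le> lattice_decay \<beta> (y - x)"
    unfolding lattice_decay_def using \<beta> coord by (intro prod_mono conjI powr_mono2') auto
  finally have "2 powr (-(d + 2 * s)) * \<delta> powr (-(d + 2 * s)) \<le> lattice_decay \<beta> (y - x)"
    using \<delta> \<beta> by (simp add: powr_mult)
  hence "2 powr (d + 2 * s) * (2 powr (-(d + 2 * s)) * \<delta> powr (-(d + 2 * s)))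
      \<le> 2 powr (d + 2 * s) * lattice_decay \<beta> (y - x)"
    by (intro mult_left_mono) auto
  thus ?thesis by (simp add: d_def \<beta>_def \<delta>_def mult.assoc[symmetric] powr_add[symmetric])
qed

lemma lattice_decay_shift:
  fixes x :: "'d::finite \<Rightarrow> int"
  assumes "1 < \<beta>"
  shows "(\<lambda>y. lattice_decay \<beta> (y - x)) summable_on UNIV"
    and "infsum (\<lambda>y. lattice_decay \<beta> (y - x)) UNIV = infsum (lattice_decay \<beta>) (UNIV :: ('d \<Rightarrow> int) set)"
proof -
  have inj: "inj_on (\<lambda>y. y - x) UNIV" by (auto simp: inj_on_def fun_eq_iff)
  have onto: "(\<lambda>y. y - x) ` UNIV = UNIV"
    by (auto simp: image_iff fun_eq_iff intro!: exI[of _ "\<lambda>i. _ i + x i"])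
  have "(lattice_decay \<beta> :: ('d \<Rightarrow> int) \<Rightarrow> real) summable_on UNIV"
    by (rule lattice_decay_summable[OF assms])
  thus "(\<lambda>y. lattice_decay \<beta> (y - x)) summable_on UNIV"
    using summable_on_reindex[OF inj, of "lattice_decay \<beta>"] by (simp add: onto o_def)
  show "infsum (\<lambda>y. lattice_decay \<beta> (y - x)) UNIV = infsum (lattice_decay \<beta>) (UNIV :: ('d \<Rightarrow> int) set)"
    using infsum_reindex[OF inj, of "lattice_decay \<beta>"] by (simp add: onto o_def)
qed

locale summable_weight =
  fixes w :: "('d::finite \<Rightarrow> int) \<Rightarrow> ('d \<Rightarrow> int) \<Rightarrow> real" and M C :: real
  assumes row_bound_nonneg: "0 \<le> M"
    and weight_pos: "\<And>x y. x \<noteq> y \<Longrightarrow> 0 < w x y"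
    and weight_sym: "\<And>x y. x \<noteq> y \<Longrightarrow> w x y = w y x"
    and weight_le: "\<And>x y. x \<noteq> y \<Longrightarrow> w x y \<le> C"
    and row_summable: "\<And>x. (\<lambda>y. w x y) summable_on (UNIV - {x})"
    and row_sum_le: "\<And>x. infsum (\<lambda>y. w x y) (UNIV - {x}) \<le> M"

lemma summable_weight_of_lattice_decay_bound:
  fixes w :: "('d::finite \<Rightarrow> int) \<Rightarrow> ('d \<Rightarrow> int) \<Rightarrow> real"
  assumes sym_pos: "\<And>x y. x \<noteq> y \<Longrightarrow> w x y = w y x \<and> 0 < w x y"
    and bounded: "\<And>x y. x \<noteq> y \<Longrightarrow> w x y \<le> C"
    and decay: "1 < \<beta>" "0 \<le> K" "\<And>x y. x \<noteq> y \<Longrightarrow> w x y \<le> K * lattice_decay \<beta> (y - x)"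
  shows "summable_weight w (K * infsum (lattice_decay \<beta>) (UNIV :: ('d \<Rightarrow> int) set)) C"
proof
  fix x :: "'d \<Rightarrow> int"
  have major: "(\<lambda>y. K * lattice_decay \<beta> (y - x)) summable_on UNIV"
    by (intro summable_on_cmult_right lattice_decay_shift decay(1))
  show summable: "(\<lambda>y. w x y) summable_on (UNIV - {x})"
  proof (rule summable_on_comparison_test[OF summable_on_subset[OF major]])
    fix y assume "y \<in> UNIV - {x}"
    thus "w x y \<le> K * lattice_decay \<beta> (y - x)" "0 \<le> w x y"
      using decay(3)[of x y] sym_pos[of x y] by auto
  qed auto
  have "infsum (\<lambda>y. w x y) (UNIV - {x}) \<le> infsum (\<lambda>y. K * lattice_decay \<beta> (y - x)) UNIV"
    by (rule infsum_mono_neutral[OF summable major]) (use decay in \<open>auto simp: lattice_decay_nonneg\<close>)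
  also have "\<dots> = K * infsum (lattice_decay \<beta>) (UNIV :: ('d \<Rightarrow> int) set)"
    unfolding infsum_cmult_right' lattice_decay_shift(2)[OF decay(1)] ..
  finally show "infsum (\<lambda>y. w x y) (UNIV - {x}) \<le> K * infsum (lattice_decay \<beta>) (UNIV :: ('d \<Rightarrow> int) set)" .
qed (use sym_pos bounded decay in \<open>auto intro: mult_nonneg_nonneg infsum_nonneg lattice_decay_nonneg\<close>)

lemma admissible_weight_summable_weight:
  fixes w :: "('d::finite \<Rightarrow> int) \<Rightarrow> ('d \<Rightarrow> int) \<Rightarrow> real"
  assumes w: "admissible_weight s w" and s: "0 < s"
  obtains M C where "summable_weight w M C"
proof -
  define \<alpha> where "\<alpha> = real CARD('d) + 2 * s"
  define \<beta> where "\<beta> = 1 + 2 * s / real CARD('d)"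
  have \<alpha>: "0 \<le> \<alpha>" unfolding \<alpha>_def using s by simp
  have \<beta>: "1 < \<beta>" unfolding \<beta>_def using s by simp
  obtain C where C: "0 \<le> C" and upper: "\<And>x y. x \<noteq> y \<Longrightarrow> w x y \<le> C * ldist x y powr (-\<alpha>)"
    using w unfolding admissible_weight_def \<alpha>_def by (metis order.trans less_imp_le)
  have "w x y \<le> C" if "x \<noteq> y" for x y
  proof -
    have "1 \<le> ldist x y powr \<alpha>" using ldist_ge_1[OF that] \<alpha> by (rule ge_one_powr_ge_zero)
    hence "ldist x y powr (-\<alpha>) \<le> 1" by (simp add: powr_minus inverse_le_1_iff)
    thus ?thesis using upper[OF that] C by (smt (verit) mult_left_le)
  qed
  moreover have "w x y \<le> (C * 2 powr \<alpha>) * lattice_decay \<beta> (y - x)" if "x \<noteq> y" for x y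
    using upper[OF that] mult_left_mono[OF ldist_powr_le_lattice_decay[OF that s] C]
    by (simp add: \<alpha>_def \<beta>_def mult.assoc)
  moreover have "\<And>x y. x \<noteq> y \<Longrightarrow> w x y = w y x \<and> 0 < w x y"
    using w unfolding admissible_weight_def by blast
  ultimately have "summable_weight w ((C * 2 powr \<alpha>) * infsum (lattice_decay \<beta>) (UNIV :: ('d \<Rightarrow> int) set)) C"
    using C by (intro summable_weight_of_lattice_decay_bound[OF _ _ \<beta>]) auto
  thus ?thesis by (rule that)
qed
section \<open>Gradient products of square-summable functions\<close>

lemma abs_mult_le_half_sum_squares: "\<bar>a * b\<bar> \<le> (1/2) * a\<^sup>2 + (1/2) * (b::real)\<^sup>2"
  using sum_squares_bound[of "\<bar>a\<bar>" "\<bar>b\<bar>"] by (simp add: abs_mult)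

lemma power2_diff_le_twice_sum_squares: "(a - b)\<^sup>2 \<le> 2 * a\<^sup>2 + 2 * (b::real)\<^sup>2"
  using sum_squares_bound[of a "-b"] by (simp add: power2_diff)

definition l2 :: "('a \<Rightarrow> real) \<Rightarrow> bool" where
  "l2 f \<longleftrightarrow> (\<lambda>x. (f x)\<^sup>2) summable_on UNIV"

lemma l2_lincomb:
  assumes "l2 f" "l2 g"
  shows "l2 (\<lambda>x. a * f x + b * g x)"
proof -
  have "(\<lambda>x. 2 * a\<^sup>2 * (f x)\<^sup>2 + 2 * b\<^sup>2 * (g x)\<^sup>2) summable_on UNIV"
    using assms unfolding l2_def by (intro summable_on_add summable_on_cmult_right)
  moreover have "(a * f x + b * g x)\<^sup>2 \<le> 2 * a\<^sup>2 * (f x)\<^sup>2 + 2 * b\<^sup>2 * (g x)\<^sup>2" for x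
    using power2_diff_le_twice_sum_squares[of "a * f x" "- (b * g x)"] by (simp add: power_mult_distrib)
  ultimately show ?thesis unfolding l2_def by (rule summable_on_comparison_test) simp
qed

lemma l2_dominated:
  assumes "l2 g" "\<And>x. \<bar>f x\<bar> \<le> \<bar>g x\<bar>"
  shows "l2 f"
  unfolding l2_def
  by (rule summable_on_comparison_test[OF assms(1)[unfolded l2_def]]) (use assms(2) in \<open>auto simp: abs_le_square_iff\<close>)

lemma l2_bounded:
  assumes "l2 f"
  obtains K where "1 \<le> K" "\<And>x. \<bar>f x\<bar> \<le> K"
proof
  define S where "S = infsum (\<lambda>x. (f x)\<^sup>2) UNIV"
  show "\<bar>f x\<bar> \<le> max 1 (sqrt S)" for x
  proof -
    have "(f x)\<^sup>2 \<le> S"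
      using assms finite_sum_le_infsum[of "\<lambda>x. (f x)\<^sup>2" UNIV "{x}"] by (auto simp: S_def l2_def)
    hence "\<bar>f x\<bar> \<le> sqrt S" using real_le_rsqrt by simp
    thus ?thesis by simp
  qed
qed simp

lemma grad_prod_commute: "grad_prod w f k x = grad_prod w k f x"
  unfolding grad_prod_def by (simp add: mult_ac)

lemma grad_prod_cmult_right: "grad_prod w f (\<lambda>z. c * k z) x = c * grad_prod w f k x"
proof -
  have "(\<lambda>y. w x y * (f x - f y) * (c * k x - c * k y)) = (\<lambda>y. c * (w x y * (f x - f y) * (k x - k y)))"
    by (auto simp: algebra_simps)
  thus ?thesis unfolding grad_prod_def by (simp add: infsum_cmult_right')
qed

definition weighted_square_sum ::
  "(('d::finite \<Rightarrow> int) \<Rightarrow> ('d \<Rightarrow> int) \<Rightarrow> real) \<Rightarrow> (('d \<Rightarrow> int) \<Rightarrow> real) \<Rightarrow> ('d \<Rightarrow> int) \<Rightarrow> real" where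
  "weighted_square_sum w f x = infsum (\<lambda>y. w x y * (f y)\<^sup>2) (UNIV - {x})"

context summable_weight
begin

lemma weight_nonneg: "x \<noteq> y \<Longrightarrow> 0 \<le> w x y"
  using weight_pos[of x y] by simp

lemma grad_prod_summand_summable:
  assumes f: "l2 f" and k: "l2 k"
  shows "(\<lambda>y. w x y * (f x - f y) * (k x - k y)) summable_on (UNIV - {x})"
proof -
  define G where "G = (\<lambda>y. 2 * ((f x)\<^sup>2 + (k x)\<^sup>2) * w x y + 2 * C * ((f y)\<^sup>2 + (k y)\<^sup>2))"
  have squares: "(\<lambda>y. (f y)\<^sup>2 + (k y)\<^sup>2) summable_on (UNIV - {x})"
    by (rule summable_on_subset[OF summable_on_add]) (use f k in \<open>auto simp: l2_def\<close>)
  have G: "G summable_on (UNIV - {x})" unfolding G_def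
    by (intro summable_on_add summable_on_cmult_right row_summable squares)
  have "\<bar>w x y * (f x - f y) * (k x - k y)\<bar> \<le> G y" if "y \<in> UNIV - {x}" for y
  proof -
    have xy: "x \<noteq> y" using that by auto
    have "\<bar>(f x - f y) * (k x - k y)\<bar> \<le> 2 * ((f x)\<^sup>2 + (k x)\<^sup>2) + 2 * ((f y)\<^sup>2 + (k y)\<^sup>2)"
      using abs_mult_le_half_sum_squares[of "f x - f y" "k x - k y"]
        power2_diff_le_twice_sum_squares[of "f x" "f y"] power2_diff_le_twice_sum_squares[of "k x" "k y"]
      by simp
    hence "\<bar>w x y * (f x - f y) * (k x - k y)\<bar> \<le> w x y * (2 * ((f x)\<^sup>2 + (k x)\<^sup>2) + 2 * ((f y)\<^sup>2 + (k y)\<^sup>2))"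
      using weight_nonneg[OF xy] by (simp add: abs_mult mult.assoc mult_left_mono)
    also have "\<dots> \<le> 2 * ((f x)\<^sup>2 + (k x)\<^sup>2) * w x y + C * (2 * ((f y)\<^sup>2 + (k y)\<^sup>2))"
      using mult_right_mono[OF weight_le[OF xy], of "2 * ((f y)\<^sup>2 + (k y)\<^sup>2)"] by (simp add: algebra_simps)
    finally show ?thesis unfolding G_def by (simp add: algebra_simps)
  qed
  hence "(\<lambda>y. \<bar>w x y * (f x - f y) * (k x - k y)\<bar>) summable_on (UNIV - {x})"
    by (intro summable_on_comparison_test[OF G]) auto
  thus ?thesis using summable_on_iff_abs_summable_on_real by (auto simp: real_norm_def)
qed

lemma grad_prod_lincomb_left:
  assumes "l2 f" "l2 g" "l2 k"
  shows "grad_prod w (\<lambda>z. a * f z + b * g z) k x = a * grad_prod w f k x + b * grad_prod w g k x"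
proof -
  have split: "w x y * ((a * f x + b * g x) - (a * f y + b * g y)) * (k x - k y)
      = a * (w x y * (f x - f y) * (k x - k y)) + b * (w x y * (g x - g y) * (k x - k y))" for y
    by (simp add: algebra_simps)
  have "grad_prod w (\<lambda>z. a * f z + b * g z) k x
      = (1/2) * (infsum (\<lambda>y. a * (w x y * (f x - f y) * (k x - k y))) (UNIV - {x})
         + infsum (\<lambda>y. b * (w x y * (g x - g y) * (k x - k y))) (UNIV - {x}))"
    unfolding grad_prod_def split
    by (subst infsum_add) (intro summable_on_cmult_right grad_prod_summand_summable assms refl)+
  thus ?thesis unfolding grad_prod_def infsum_cmult_right' by (simp add: algebra_simps)
qed

lemma grad_prod_self_nonneg: "0 \<le> grad_prod w f f x"
  unfolding grad_prod_def
  by (auto intro!: infsum_nonneg mult_nonneg_nonneg[OF weight_nonneg] simp: mult.assoc)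

lemma weighted_square_summand_summable:
  assumes "l2 f"
  shows "(\<lambda>y. w x y * (f y)\<^sup>2) summable_on (UNIV - {x})"
proof -
  have "(\<lambda>y. C * (f y)\<^sup>2) summable_on (UNIV - {x})"
    using assms unfolding l2_def by (intro summable_on_cmult_right) (rule summable_on_subset[of _ UNIV], auto)
  thus ?thesis
  proof (rule summable_on_comparison_test)
    fix y assume "y \<in> UNIV - {x}"
    thus "w x y * (f y)\<^sup>2 \<le> C * (f y)\<^sup>2" "0 \<le> w x y * (f y)\<^sup>2"
      using weight_le[of x y] weight_nonneg[of x y] by (simp_all add: mult_right_mono)
  qed
qed

lemma grad_prod_self_le:
  assumes f: "l2 f"
  shows "grad_prod w f f x \<le> M * (f x)\<^sup>2 + weighted_square_sum w f x"
proof -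
  have row: "(\<lambda>y. 2 * (f x)\<^sup>2 * w x y) summable_on (UNIV - {x})"
    and sq: "(\<lambda>y. 2 * (w x y * (f y)\<^sup>2)) summable_on (UNIV - {x})"
    by (intro summable_on_cmult_right row_summable weighted_square_summand_summable f)+
  have "infsum (\<lambda>y. w x y * (f x - f y) * (f x - f y)) (UNIV - {x})
      \<le> infsum (\<lambda>y. 2 * (f x)\<^sup>2 * w x y + 2 * (w x y * (f y)\<^sup>2)) (UNIV - {x})"
  proof (rule infsum_mono[OF grad_prod_summand_summable[OF f f] summable_on_add[OF row sq]])
    fix y assume "y \<in> UNIV - {x}"
    hence "w x y * (f x - f y)\<^sup>2 \<le> w x y * (2 * (f x)\<^sup>2 + 2 * (f y)\<^sup>2)"
      using weight_nonneg by (intro mult_left_mono power2_diff_le_twice_sum_squares) auto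
    thus "w x y * (f x - f y) * (f x - f y) \<le> 2 * (f x)\<^sup>2 * w x y + 2 * (w x y * (f y)\<^sup>2)"
      by (simp add: power2_eq_square algebra_simps)
  qed
  also have "\<dots> = 2 * (f x)\<^sup>2 * infsum (\<lambda>y. w x y) (UNIV - {x}) + 2 * weighted_square_sum w f x"
    unfolding weighted_square_sum_def by (simp add: infsum_add[OF row sq] infsum_cmult_right')
  also have "\<dots> \<le> 2 * (f x)\<^sup>2 * M + 2 * weighted_square_sum w f x"
    by (intro add_right_mono mult_left_mono row_sum_le) auto
  finally show ?thesis unfolding grad_prod_def by (simp add: algebra_simps)
qed

text \<open>Summing \<open>w x y (f y)\<^sup>2\<close> first over \<open>x\<close> uses the symmetry of \<open>w\<close> and the row bound.\<close>

lemma finite_weighted_square_sums_le: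
  assumes f: "l2 f" and F: "finite F" "F \<subseteq> Sigma UNIV (\<lambda>x. UNIV - {x})"
  shows "(\<Sum>(x, y)\<in>F. w x y * (f y)\<^sup>2) \<le> M * infsum (\<lambda>x. (f x)\<^sup>2) UNIV"
proof -
  define K where "K = (\<lambda>(x, y). w x y * (f y)\<^sup>2)"
  define X where "X = fst ` F"
  define Y where "Y = snd ` F"
  have fin: "finite X" "finite Y" using F unfolding X_def Y_def by auto
  define G where "G = Sigma Y (\<lambda>y. X - {y})"
  have "F \<subseteq> prod.swap ` G" using F unfolding G_def X_def Y_def by (force simp: image_iff)
  hence "sum K F \<le> sum K (prod.swap ` G)"
    by (rule sum_mono2[rotated]) (use fin in \<open>auto intro!: mult_nonneg_nonneg weight_nonneg simp: G_def K_def\<close>)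
  also have "\<dots> = sum (K \<circ> prod.swap) G" by (rule sum.reindex) simp
  also have "\<dots> = (\<Sum>y\<in>Y. \<Sum>x\<in>X - {y}. w x y * (f y)\<^sup>2)"
    unfolding G_def K_def using fin by (subst sum.Sigma) auto
  also have "\<dots> = (\<Sum>y\<in>Y. (\<Sum>x\<in>X - {y}. w y x) * (f y)\<^sup>2)"
    by (intro sum.cong refl) (auto simp: sum_distrib_right weight_sym intro!: sum.cong)
  also have "\<dots> \<le> (\<Sum>y\<in>Y. M * (f y)\<^sup>2)"
  proof (intro sum_mono mult_right_mono)
    fix y
    have "(\<Sum>x\<in>X - {y}. w y x) \<le> infsum (\<lambda>x. w y x) (UNIV - {y})"
      by (rule finite_sum_le_infsum[OF row_summable]) (use fin weight_nonneg in auto)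
    thus "(\<Sum>x\<in>X - {y}. w y x) \<le> M" using row_sum_le[of y] by simp
  qed simp
  also have "\<dots> \<le> M * infsum (\<lambda>x. (f x)\<^sup>2) UNIV" unfolding sum_distrib_left[symmetric]
    by (intro mult_left_mono row_bound_nonneg finite_sum_le_infsum) (use f fin in \<open>auto simp: l2_def\<close>)
  finally show ?thesis unfolding K_def .
qed

lemma weighted_square_sum_summable:
  assumes f: "l2 f"
  shows "weighted_square_sum w f summable_on UNIV \<and>
         infsum (weighted_square_sum w f) UNIV \<le> M * infsum (\<lambda>x. (f x)\<^sup>2) UNIV"
proof -
  define A where "A = Sigma (UNIV::('d \<Rightarrow> int) set) (\<lambda>x. UNIV - {x})"
  define K where "K = (\<lambda>(x,y). w x y * (f y)\<^sup>2)"
  have finite_sums: "sum K F \<le> M * infsum (\<lambda>x. (f x)\<^sup>2) UNIV" if "finite F" "F \<subseteq> A" for F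
    using finite_weighted_square_sums_le[OF f that[unfolded A_def]] by (simp add: K_def)
  have K_nonneg: "z \<in> A \<Longrightarrow> 0 \<le> K z" for z
    unfolding A_def K_def by (auto intro!: mult_nonneg_nonneg weight_nonneg)
  have K: "K summable_on A"
    by (rule nonneg_bdd_above_summable_on) (use K_nonneg finite_sums in \<open>auto intro!: bdd_aboveI2\<close>)
  have inner: "(\<lambda>y. K (x, y)) summable_on (UNIV - {x})" for x
    unfolding K_def using weighted_square_summand_summable[OF f] by simp
  have W: "weighted_square_sum w f = (\<lambda>x. infsum (\<lambda>y. K (x, y)) (UNIV - {x}))"
    unfolding weighted_square_sum_def K_def by auto
  have "weighted_square_sum w f summable_on UNIV"
    unfolding W by (rule summable_on_SigmaD) (use K inner in \<open>auto simp: A_def\<close>)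
  moreover have "infsum (weighted_square_sum w f) UNIV = infsum K A"
    unfolding W A_def by (rule infsum_Sigma_banach) (use K in \<open>simp add: A_def\<close>)
  moreover have "infsum K A \<le> M * infsum (\<lambda>x. (f x)\<^sup>2) UNIV"
    by (rule infsum_le_finite_sums[OF K finite_sums])
  ultimately show ?thesis by simp
qed

lemma grad_prod_self_summable:
  assumes f: "l2 f"
  shows "(\<lambda>x. grad_prod w f f x) summable_on UNIV \<and>
         infsum (\<lambda>x. grad_prod w f f x) UNIV \<le> 2 * M * infsum (\<lambda>x. (f x)\<^sup>2) UNIV"
proof -
  have W: "weighted_square_sum w f summable_on UNIV"
    "infsum (weighted_square_sum w f) UNIV \<le> M * infsum (\<lambda>x. (f x)\<^sup>2) UNIV"
    using weighted_square_sum_summable[OF f] by auto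
  have f2: "(\<lambda>x. (f x)\<^sup>2) summable_on UNIV" using f by (simp add: l2_def)
  have G: "(\<lambda>x. M * (f x)\<^sup>2 + weighted_square_sum w f x) summable_on UNIV"
    by (intro summable_on_add summable_on_cmult_right f2 W(1))
  have summable: "(\<lambda>x. grad_prod w f f x) summable_on UNIV"
    by (rule summable_on_comparison_test[OF G]) (use grad_prod_self_le[OF f] grad_prod_self_nonneg in auto)
  have "infsum (\<lambda>x. grad_prod w f f x) UNIV \<le> infsum (\<lambda>x. M * (f x)\<^sup>2 + weighted_square_sum w f x) UNIV"
    by (rule infsum_mono[OF summable G]) (use grad_prod_self_le[OF f] in auto)
  also have "\<dots> = M * infsum (\<lambda>x. (f x)\<^sup>2) UNIV + infsum (weighted_square_sum w f) UNIV"
    by (subst infsum_add) (auto intro!: summable_on_cmult_right f2 W(1) simp: infsum_cmult_right')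
  also have "\<dots> \<le> 2 * M * infsum (\<lambda>x. (f x)\<^sup>2) UNIV" using W(2) by simp
  finally show ?thesis using summable by simp
qed

lemma abs_grad_prod_le:
  assumes f: "l2 f" and k: "l2 k"
  shows "\<bar>grad_prod w f k x\<bar> \<le> (1/2) * (grad_prod w f f x + grad_prod w k k x)"
proof -
  define a where "a = (\<lambda>y. w x y * (f x - f y) * (k x - k y))"
  define b where "b = (\<lambda>y. (1/2) * (w x y * (f x - f y) * (f x - f y)) + (1/2) * (w x y * (k x - k y) * (k x - k y)))"
  have a: "a summable_on (UNIV - {x})" unfolding a_def by (rule grad_prod_summand_summable[OF f k])
  have ff: "(\<lambda>y. w x y * (f x - f y) * (f x - f y)) summable_on (UNIV - {x})"
    and kk: "(\<lambda>y. w x y * (k x - k y) * (k x - k y)) summable_on (UNIV - {x})"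
    by (rule grad_prod_summand_summable[OF f f], rule grad_prod_summand_summable[OF k k])
  have b: "b summable_on (UNIV - {x})" unfolding b_def
    by (intro summable_on_add summable_on_cmult_right ff kk)
  have pointwise: "\<bar>a y\<bar> \<le> b y" if "y \<in> UNIV - {x}" for y
  proof -
    have "w x y * \<bar>(f x - f y) * (k x - k y)\<bar> \<le> w x y * ((1/2) * (f x - f y)\<^sup>2 + (1/2) * (k x - k y)\<^sup>2)"
      using that weight_nonneg by (intro mult_left_mono abs_mult_le_half_sum_squares) auto
    moreover have "\<bar>a y\<bar> = w x y * \<bar>(f x - f y) * (k x - k y)\<bar>"
      unfolding a_def using that weight_nonneg[of x y] by (simp add: abs_mult mult.assoc)
    moreover have "b y = w x y * ((1/2) * (f x - f y)\<^sup>2 + (1/2) * (k x - k y)\<^sup>2)"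
      unfolding b_def by (simp add: power2_eq_square algebra_simps)
    ultimately show ?thesis by simp
  qed
  have "infsum a (UNIV - {x}) \<le> infsum b (UNIV - {x})"
    by (rule infsum_mono[OF a b]) (use pointwise in force)
  moreover have "- infsum a (UNIV - {x}) \<le> infsum b (UNIV - {x})"
  proof -
    have "infsum (\<lambda>y. - a y) (UNIV - {x}) \<le> infsum b (UNIV - {x})"
      by (rule infsum_mono[OF _ b]) (use pointwise a in \<open>force simp: summable_on_uminus\<close>)+
    thus ?thesis by (simp add: infsum_uminus)
  qed
  moreover have "infsum b (UNIV - {x}) = (1/2) * infsum (\<lambda>y. w x y * (f x - f y) * (f x - f y)) (UNIV - {x})
       + (1/2) * infsum (\<lambda>y. w x y * (k x - k y) * (k x - k y)) (UNIV - {x})"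
    unfolding b_def
    by (subst infsum_add[OF summable_on_cmult_right[OF ff] summable_on_cmult_right[OF kk]])
       (simp only: infsum_cmult_right')
  ultimately show ?thesis unfolding grad_prod_def a_def by (simp add: abs_le_iff algebra_simps)
qed

lemma grad_prod_summable:
  assumes f: "l2 f" and k: "l2 k"
  shows "(\<lambda>x. grad_prod w f k x) summable_on UNIV"
proof -
  have "(\<lambda>x. (1/2) * (grad_prod w f f x + grad_prod w k k x)) summable_on UNIV"
    using grad_prod_self_summable[OF f] grad_prod_self_summable[OF k]
    by (intro summable_on_cmult_right summable_on_add) auto
  hence "(\<lambda>x. \<bar>grad_prod w f k x\<bar>) summable_on UNIV"
    by (rule summable_on_comparison_test) (use abs_grad_prod_le[OF f k] in auto)
  thus ?thesis using summable_on_iff_abs_summable_on_real by (auto simp: real_norm_def)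
qed

end

lemma infsum_restrict_finite:
  fixes q :: "'a \<Rightarrow> real"
  assumes "finite F"
  shows "(\<lambda>x. if x \<in> F then q x else 0) summable_on UNIV"
    and "infsum (\<lambda>x. if x \<in> F then q x else 0) UNIV = sum q F"
proof -
  have "(\<lambda>x. if x \<in> F then q x else 0) summable_on UNIV \<longleftrightarrow> q summable_on F"
    by (rule summable_on_cong_neutral) auto
  thus "(\<lambda>x. if x \<in> F then q x else 0) summable_on UNIV" using assms by simp
  have "infsum (\<lambda>x. if x \<in> F then q x else 0) UNIV = infsum q F"
    by (rule infsum_cong_neutral) auto
  thus "infsum (\<lambda>x. if x \<in> F then q x else 0) UNIV = sum q F" using assms by simp
qed

lemma infsum_pos_of_pos_point:
  fixes f :: "'a \<Rightarrow> real"
  assumes "f summable_on UNIV" "\<And>x. 0 \<le> f x" "0 < f x0"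
  shows "0 < infsum f UNIV"
proof -
  have "sum f {x0} \<le> infsum f UNIV" by (rule finite_sum_le_infsum) (use assms in auto)
  thus ?thesis using assms(3) by simp
qed

lemma l2_tail_small:
  assumes f: "l2 f" and "0 < \<epsilon>"
  obtains F where "finite F" "infsum (\<lambda>x. (if x \<in> F then 0 else f x)\<^sup>2) UNIV \<le> \<epsilon>"
proof -
  define S where "S = infsum (\<lambda>x. (f x)\<^sup>2) UNIV"
  have f2: "(\<lambda>x. (f x)\<^sup>2) summable_on UNIV" using f by (simp add: l2_def)
  obtain F where F: "finite F" "dist (sum (\<lambda>x. (f x)\<^sup>2) F) S \<le> \<epsilon>"
    using infsum_finite_approximation[OF f2 assms(2)] unfolding S_def by auto
  define tail where "tail = (\<lambda>x. if x \<in> F then 0 else f x)"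
  have split: "(\<lambda>x. (f x)\<^sup>2) = (\<lambda>x. (tail x)\<^sup>2 + (if x \<in> F then (f x)\<^sup>2 else 0))"
    by (auto simp: tail_def)
  have "l2 tail" by (rule l2_dominated[OF f]) (simp add: tail_def)
  note restrict = infsum_restrict_finite[OF F(1), of "\<lambda>x. (f x)\<^sup>2"]
  have "S = infsum (\<lambda>x. (tail x)\<^sup>2) UNIV + sum (\<lambda>x. (f x)\<^sup>2) F"
    unfolding S_def by (subst split, subst infsum_add) (use \<open>l2 tail\<close> restrict in \<open>auto simp: l2_def\<close>)
  moreover have "sum (\<lambda>x. (f x)\<^sup>2) F \<le> S"
    unfolding S_def by (rule finite_sum_le_infsum[OF f2 F(1)]) auto
  ultimately have "infsum (\<lambda>x. (tail x)\<^sup>2) UNIV \<le> \<epsilon>" using F(2) by (simp add: dist_real_def)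
  thus ?thesis using that[OF F(1)] unfolding tail_def by blast
qed

context summable_weight
begin

lemma W_norm_sq_nonneg: "0 \<le> W_norm_sq w f"
  unfolding W_norm_sq_def by (intro infsum_nonneg add_nonneg_nonneg grad_prod_self_nonneg) auto

lemma W_norm_sq_le_l2:
  assumes f: "l2 f"
  shows "W_norm_sq w f \<le> (2 * M + 1) * infsum (\<lambda>x. (f x)\<^sup>2) UNIV"
proof -
  have g: "(\<lambda>x. grad_prod w f f x) summable_on UNIV"
    "infsum (\<lambda>x. grad_prod w f f x) UNIV \<le> 2 * M * infsum (\<lambda>x. (f x)\<^sup>2) UNIV"
    using grad_prod_self_summable[OF f] by auto
  have "W_norm_sq w f = infsum (\<lambda>x. grad_prod w f f x) UNIV + infsum (\<lambda>x. (f x)\<^sup>2) UNIV"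
    unfolding W_norm_sq_def by (rule infsum_add[OF g(1)]) (use f in \<open>simp add: l2_def\<close>)
  thus ?thesis using g(2) by (simp add: algebra_simps)
qed

lemma l2_in_W_space:
  assumes f: "l2 f"
  shows "f \<in> W_space w"
proof -
  have "\<exists>F. finite F \<and> infsum (\<lambda>x. (if x \<in> F then 0 else f x)\<^sup>2) UNIV \<le> inverse (real (Suc n))" for n
    by (rule l2_tail_small[OF f, of "inverse (real (Suc n))"]) auto
  then obtain Fs where Fs: "\<And>n. finite (Fs n)"
    "\<And>n. infsum (\<lambda>x. (if x \<in> Fs n then 0 else f x)\<^sup>2) UNIV \<le> inverse (real (Suc n))"
    by metis
  define \<phi> where "\<phi> = (\<lambda>n x. if x \<in> Fs n then f x else 0)"
  have tail: "(\<lambda>x. f x - \<phi> n x) = (\<lambda>x. if x \<in> Fs n then 0 else f x)" for n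
    unfolding \<phi>_def by auto
  have W_le: "W_norm_sq w (\<lambda>x. f x - \<phi> n x) \<le> (2 * M + 1) * inverse (real (Suc n))" for n
  proof -
    have "l2 (\<lambda>x. if x \<in> Fs n then 0 else f x)" by (rule l2_dominated[OF f]) simp
    hence "W_norm_sq w (\<lambda>x. f x - \<phi> n x) \<le> (2 * M + 1) * infsum (\<lambda>x. (if x \<in> Fs n then 0 else f x)\<^sup>2) UNIV"
      unfolding tail by (rule W_norm_sq_le_l2)
    also have "\<dots> \<le> (2 * M + 1) * inverse (real (Suc n))"
      using Fs(2)[of n] row_bound_nonneg by (intro mult_left_mono) auto
    finally show ?thesis .
  qed
  have bound_lim: "(\<lambda>n. (2 * M + 1) * inverse (real (Suc n))) \<longlonglongrightarrow> 0"
    using tendsto_mult_right_zero[OF LIMSEQ_inverse_real_of_nat] by simp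
  have "(\<lambda>n. W_norm_sq w (\<lambda>x. f x - \<phi> n x)) \<longlonglongrightarrow> 0"
    by (rule tendsto_sandwich[OF _ _ tendsto_const bound_lim]) (use W_le W_norm_sq_nonneg in auto)
  moreover have "finite {x. \<phi> n x \<noteq> 0}" for n
    by (rule finite_subset[OF _ Fs(1)[of n]]) (auto simp: \<phi>_def)
  ultimately show ?thesis
    unfolding W_space_def using grad_prod_self_summable[OF f] f[unfolded l2_def] by blast
qed

lemma l2_in_H_space:
  assumes "l2 f" "(\<lambda>x. h x * (f x)\<^sup>2) summable_on UNIV"
  shows "f \<in> H_space w h"
  unfolding H_space_def using l2_in_W_space assms by simp


lemma grad_prod_lincomb_self:
  assumes f: "l2 f" and g: "l2 g"
  shows "grad_prod w (\<lambda>z. r * f z + t * g z) (\<lambda>z. r * f z + t * g z) x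
    = r\<^sup>2 * grad_prod w f f x + 2 * r * t * grad_prod w f g x + t\<^sup>2 * grad_prod w g g x"
proof -
  have v: "l2 (\<lambda>z. r * f z + t * g z)" by (rule l2_lincomb[OF f g])
  have "grad_prod w (\<lambda>z. r * f z + t * g z) (\<lambda>z. r * f z + t * g z) x
      = r * grad_prod w f (\<lambda>z. r * f z + t * g z) x + t * grad_prod w g (\<lambda>z. r * f z + t * g z) x"
    by (rule grad_prod_lincomb_left[OF f g v])
  also have "\<dots> = r * (r * grad_prod w f f x + t * grad_prod w g f x)
      + t * (r * grad_prod w f g x + t * grad_prod w g g x)"
    by (simp only: grad_prod_commute[of w _ "\<lambda>z. r * f z + t * g z"] grad_prod_lincomb_left[OF f g f]
        grad_prod_lincomb_left[OF f g g])
  finally show ?thesis by (simp add: grad_prod_commute[of w g f] power2_eq_square algebra_simps)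
qed

lemma grad_norm_sq_lincomb:
  assumes f: "l2 f" and g: "l2 g"
  shows "grad_norm_sq w (\<lambda>z. r * f z + t * g z)
    = r\<^sup>2 * grad_norm_sq w f + 2 * r * t * infsum (\<lambda>x. grad_prod w f g x) UNIV + t\<^sup>2 * grad_norm_sq w g"
proof -
  have ff: "(\<lambda>x. grad_prod w f f x) summable_on UNIV" and gg: "(\<lambda>x. grad_prod w g g x) summable_on UNIV"
    using grad_prod_self_summable[OF f] grad_prod_self_summable[OF g] by simp_all
  have fg: "(\<lambda>x. grad_prod w f g x) summable_on UNIV" by (rule grad_prod_summable[OF f g])
  show ?thesis
    unfolding grad_norm_sq_def grad_prod_lincomb_self[OF f g]
    by (subst infsum_add | subst infsum_cmult_right' | rule summable_on_add summable_on_cmult_right ff fg gg)+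
      simp
qed

lemma infsum_grad_prod_lincomb_cmult:
  assumes f: "l2 f" and g: "l2 g"
  shows "infsum (\<lambda>x. grad_prod w (\<lambda>z. r * f z + t * g z) (\<lambda>z. r * f z) x) UNIV
    = r\<^sup>2 * grad_norm_sq w f + r * t * infsum (\<lambda>x. grad_prod w f g x) UNIV"
proof -
  have ff: "(\<lambda>x. grad_prod w f f x) summable_on UNIV" using grad_prod_self_summable[OF f] by simp
  have fg: "(\<lambda>x. grad_prod w f g x) summable_on UNIV" by (rule grad_prod_summable[OF f g])
  have "grad_prod w (\<lambda>z. r * f z + t * g z) (\<lambda>z. r * f z) x
      = r\<^sup>2 * grad_prod w f f x + r * t * grad_prod w f g x" for x
    unfolding grad_prod_cmult_right grad_prod_lincomb_left[OF f g f]
    by (simp add: grad_prod_commute[of w g f] power2_eq_square algebra_simps)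
  thus ?thesis unfolding grad_norm_sq_def
    by (simp add: infsum_add summable_on_cmult_right ff fg infsum_cmult_right')
qed

end

section \<open>The logarithmic nonlinearity\<close>

lemma powr_le_bound_times_square:
  fixes y K p :: real
  assumes "0 \<le> y" "y \<le> K" "2 \<le> p"
  shows "y powr p \<le> K powr (p - 2) * y\<^sup>2"
proof (cases "y = 0")
  case False
  hence y: "0 < y" using assms by simp
  have "y powr (p - 2) \<le> K powr (p - 2)" using assms y by (intro powr_mono2) auto
  hence "y\<^sup>2 * y powr (p - 2) \<le> y\<^sup>2 * K powr (p - 2)" by (intro mult_left_mono) auto
  moreover have "y powr p = y powr 2 * y powr (p - 2)" by (simp add: powr_add[symmetric])
  ultimately show ?thesis using y by (simp add: mult.commute)
qed simp

text \<open>Near 0 the bound uses \<open>-ln y \<le> 1/y\<close> and \<open>p \<ge> 3\<close>; for \<open>y \<ge> 1\<close> it uses \<open>ln y \<le> y\<close>.\<close>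

lemma abs_powr_ln_le_bound_times_square:
  fixes y K p :: real
  assumes y: "0 < y" "y \<le> K" and K: "1 \<le> K" and p: "3 \<le> p"
  shows "\<bar>y powr p * ln (y\<^sup>2)\<bar> \<le> (2 + 2 * K powr (p - 1)) * y\<^sup>2"
proof -
  have ln2: "ln (y\<^sup>2) = 2 * ln y" using y by (simp add: ln_realpow)
  have "\<bar>y powr p * ln (y\<^sup>2)\<bar> \<le> 2 * y\<^sup>2 + 2 * K powr (p - 1) * y\<^sup>2"
  proof (cases "y \<le> 1")
    case True
    have ln_nonpos: "ln y \<le> 0" using True y by simp
    have "ln (1 / y) \<le> 1 / y - 1" using y by (intro ln_le_minus_one) auto
    hence ln_bound: "- ln y \<le> 1 / y" using y by (simp add: ln_div)
    have "y powr p = y\<^sup>2 * y * y powr (p - 3)"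
    proof -
      have "y powr p = y powr 3 * y powr (p - 3)" by (simp add: powr_add[symmetric])
      thus ?thesis using y by (simp add: power3_eq_cube power2_eq_square)
    qed
    moreover have "y powr (p - 3) \<le> 1"
      using powr_mono'[of 0 "p - 3" y] True y p by simp
    ultimately have y_powr: "y powr p \<le> y\<^sup>2 * y" using y
      by (metis mult_left_le mult_nonneg_nonneg less_imp_le zero_le_power2 powr_ge_zero)
    have "\<bar>y powr p * ln (y\<^sup>2)\<bar> = y powr p * (2 * (- ln y))"
      using ln2 ln_nonpos by (simp add: abs_mult)
    also have "\<dots> \<le> (y\<^sup>2 * y) * (2 * (1 / y))"
      using y_powr ln_bound ln_nonpos y by (intro mult_mono) auto
    also have "\<dots> = 2 * y\<^sup>2" using y by (simp add: power2_eq_square)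
    finally show ?thesis by (simp add: add_increasing2)
  next
    case False
    have ln_nonneg: "0 \<le> ln y" using False by simp
    have K_powr: "K powr (p - 2) * K = K powr (p - 1)"
      using K powr_add[of K "p - 2" 1] by simp
    have "\<bar>y powr p * ln (y\<^sup>2)\<bar> = y powr p * (2 * ln y)" using ln2 ln_nonneg by (simp add: abs_mult)
    also have "\<dots> \<le> (K powr (p - 2) * y\<^sup>2) * (2 * y)"
      using powr_le_bound_times_square[of y K p] ln_nonneg y p by (intro mult_mono) (auto simp: less_imp_le)
    also have "\<dots> \<le> (K powr (p - 2) * y\<^sup>2) * (2 * K)"
      using y by (intro mult_left_mono) auto
    also have "\<dots> = 2 * (K powr (p - 2) * K) * y\<^sup>2" by (simp add: algebra_simps)
    also have "\<dots> = 2 * K powr (p - 1) * y\<^sup>2" by (simp only: K_powr)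
    finally show ?thesis by (simp add: add_increasing)
  qed
  thus ?thesis by (simp only: distrib_right)
qed

lemma l2_powr_summable:
  assumes f: "l2 f" and p: "3 \<le> p"
  shows "(\<lambda>x. \<bar>f x\<bar> powr p) summable_on UNIV"
    and "(\<lambda>x. \<bar>f x\<bar> powr p * ln ((f x)\<^sup>2)) summable_on UNIV"
proof -
  obtain K where K: "1 \<le> K" "\<And>x. \<bar>f x\<bar> \<le> K" using l2_bounded[OF f] by blast
  have f2: "(\<lambda>x. (f x)\<^sup>2) summable_on UNIV" using f by (simp add: l2_def)
  show "(\<lambda>x. \<bar>f x\<bar> powr p) summable_on UNIV"
  proof (rule summable_on_comparison_test)
    show "(\<lambda>x. K powr (p - 2) * (f x)\<^sup>2) summable_on UNIV" by (intro summable_on_cmult_right f2)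
    show "\<bar>f x\<bar> powr p \<le> K powr (p - 2) * (f x)\<^sup>2" for x
      using powr_le_bound_times_square[of "\<bar>f x\<bar>" K p] K p by simp
  qed auto
  have "(\<lambda>x. \<bar>\<bar>f x\<bar> powr p * ln ((f x)\<^sup>2)\<bar>) summable_on UNIV"
  proof (rule summable_on_comparison_test)
    show "(\<lambda>x. (2 + 2 * K powr (p - 1)) * (f x)\<^sup>2) summable_on UNIV" by (intro summable_on_cmult_right f2)
    show "\<bar>\<bar>f x\<bar> powr p * ln ((f x)\<^sup>2)\<bar> \<le> (2 + 2 * K powr (p - 1)) * (f x)\<^sup>2" for x
      using abs_powr_ln_le_bound_times_square[of "\<bar>f x\<bar>" K p] K p by (cases "f x = 0") auto
  qed auto
  thus "(\<lambda>x. \<bar>f x\<bar> powr p * ln ((f x)\<^sup>2)) summable_on UNIV"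
    using summable_on_iff_abs_summable_on_real by (auto simp: real_norm_def)
qed

lemma logterm_cmult_times:
  fixes c y p :: real
  assumes c: "c \<noteq> 0"
  shows "logterm p (c * y) * (c * y)
    = \<bar>c\<bar> powr p * ln (c\<^sup>2) * \<bar>y\<bar> powr p + \<bar>c\<bar> powr p * (\<bar>y\<bar> powr p * ln (y\<^sup>2))"
proof (cases "y = 0")
  case False
  hence cy: "0 < \<bar>c * y\<bar>" using c by simp
  have "logterm p (c * y) * (c * y) = \<bar>c * y\<bar> powr (p - 2) * (c * y)\<^sup>2 * ln ((c * y)\<^sup>2)"
    using cy by (simp add: logterm_def power2_eq_square mult_ac)
  also have "\<bar>c * y\<bar> powr (p - 2) * (c * y)\<^sup>2 = \<bar>c * y\<bar> powr (p - 2) * \<bar>c * y\<bar> powr 2"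
    using cy by simp
  also have "\<dots> = \<bar>c * y\<bar> powr p" by (subst powr_add[symmetric]) simp
  also have "\<dots> = \<bar>c\<bar> powr p * \<bar>y\<bar> powr p" by (simp add: abs_mult powr_mult)
  also have "ln ((c * y)\<^sup>2) = ln (c\<^sup>2) + ln (y\<^sup>2)"
    using c False by (simp add: power_mult_distrib ln_mult)
  finally show ?thesis by (simp only: distrib_left mult_ac)
qed (simp add: logterm_def)

lemma infsum_logterm_cmult:
  assumes f: "l2 f" and r: "0 < r" and p: "3 \<le> p"
  shows "infsum (\<lambda>x. logterm p (r * f x) * (r * f x)) UNIV
    = r powr p * (2 * ln r * infsum (\<lambda>x. \<bar>f x\<bar> powr p) UNIV
        + infsum (\<lambda>x. \<bar>f x\<bar> powr p * ln ((f x)\<^sup>2)) UNIV)"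
proof -
  have L: "(\<lambda>x. \<bar>f x\<bar> powr p) summable_on UNIV" "(\<lambda>x. \<bar>f x\<bar> powr p * ln ((f x)\<^sup>2)) summable_on UNIV"
    using l2_powr_summable[OF f p] by auto
  have "infsum (\<lambda>x. logterm p (r * f x) * (r * f x)) UNIV
      = \<bar>r\<bar> powr p * ln (r\<^sup>2) * infsum (\<lambda>x. \<bar>f x\<bar> powr p) UNIV
        + \<bar>r\<bar> powr p * infsum (\<lambda>x. \<bar>f x\<bar> powr p * ln ((f x)\<^sup>2)) UNIV"
    using r unfolding logterm_cmult_times[of r p, OF less_imp_neq[OF r, symmetric]]
    by (subst infsum_add) (auto intro!: summable_on_cmult_right L simp: infsum_cmult_right')
  also have "\<dots> = r powr p * (2 * ln r * infsum (\<lambda>x. \<bar>f x\<bar> powr p) UNIV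
        + infsum (\<lambda>x. \<bar>f x\<bar> powr p * ln ((f x)\<^sup>2)) UNIV)"
    using r by (simp add: ln_realpow distrib_left)
  finally show ?thesis .
qed

section \<open>The scalar fiber system\<close>

text \<open>The pairings \<open>\<langle>J'(r u\<^sup>+ + t u\<^sup>-), r u\<^sup>+\<rangle>\<close> and \<open>\<langle>J'(r u\<^sup>+ + t u\<^sup>-), t u\<^sup>-\<rangle>\<close> are
  \<open>fiber_eq\<close> with coefficients \<open>P = \<parallel>\<nabla>\<^sup>s u\<^sup>+\<parallel>\<^sup>2\<close>, \<open>N = \<parallel>\<nabla>\<^sup>s u\<^sup>-\<parallel>\<^sup>2\<close>,
  \<open>B = \<integral> \<nabla>\<^sup>s u\<^sup>+ \<nabla>\<^sup>s u\<^sup>-\<close>, \<open>H = \<integral> h (u\<^sup>+)\<^sup>2\<close>, \<open>L = \<integral> |u\<^sup>+|\<^sup>p\<close>,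
  \<open>G = \<integral> |u\<^sup>+|\<^sup>p log (u\<^sup>+)\<^sup>2\<close>, respectively with the roles of \<open>u\<^sup>+\<close>, \<open>u\<^sup>-\<close> and of
  \<open>r\<close>, \<open>t\<close> exchanged.\<close>

definition fiber_poly :: "real \<Rightarrow> real \<Rightarrow> real \<Rightarrow> real \<Rightarrow> real \<Rightarrow> real \<Rightarrow> real \<Rightarrow> real \<Rightarrow> real" where
  "fiber_poly a b P N B H r t = a * (r\<^sup>2 * P + r * t * B) + r\<^sup>2 * H
     + b * (r\<^sup>2 * P + 2 * r * t * B + t\<^sup>2 * N) * (r\<^sup>2 * P + r * t * B)"

definition fiber_eq ::
  "real \<Rightarrow> real \<Rightarrow> real \<Rightarrow> real \<Rightarrow> real \<Rightarrow> real \<Rightarrow> real \<Rightarrow> real \<Rightarrow> real \<Rightarrow> real \<Rightarrow> real \<Rightarrow> real" where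
  "fiber_eq a b p P N B H L G r t = fiber_poly a b P N B H r t - r powr p * (2 * ln r * L + G)"

lemma fiber_poly_scale:
  "fiber_poly a b P N B H (c * r) (c * t)
    = c\<^sup>2 * (a * (r\<^sup>2 * P + r * t * B) + r\<^sup>2 * H)
      + c ^ 4 * (b * (r\<^sup>2 * P + 2 * r * t * B + t\<^sup>2 * N) * (r\<^sup>2 * P + r * t * B))"
  unfolding fiber_poly_def by (simp add: power_mult_distrib power2_eq_square power4_eq_xxxx ring_distribs mult_ac)

lemma power_le_powr:
  fixes x p :: real
  assumes "1 \<le> x" "real n \<le> p"
  shows "x ^ n \<le> x powr p"
proof -
  have "x powr real n \<le> x powr p" using assms by (intro powr_mono) auto
  thus ?thesis using assms by (simp add: powr_realpow)
qed

lemma powr_le_power: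
  fixes x p :: real
  assumes "0 < x" "x \<le> 1" "real n \<le> p"
  shows "x powr p \<le> x ^ n"
proof -
  have "x powr p \<le> x powr real n" using assms by (intro powr_mono') auto
  thus ?thesis using assms by (simp add: powr_realpow)
qed

locale fiber_coeffs =
  fixes a b p P N B H L G :: real
  assumes a_pos: "0 < a" and b_pos: "0 < b"
    and P_nonneg: "0 \<le> P" and N_nonneg: "0 \<le> N" and B_nonneg: "0 \<le> B"
    and H_pos: "0 < H" and L_pos: "0 < L" and p_ge_4: "4 \<le> p"
begin

abbreviation "D \<equiv> fiber_poly a b P N B H"
abbreviation "F \<equiv> fiber_eq a b p P N B H L G"

lemma fiber_poly_pos: "0 < r \<Longrightarrow> 0 \<le> t \<Longrightarrow> 0 < D r t"
  unfolding fiber_poly_def using a_pos b_pos P_nonneg N_nonneg B_nonneg H_pos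
  by (intro add_nonneg_pos add_pos_nonneg mult_nonneg_nonneg add_nonneg_nonneg) auto

lemma fiber_poly_mono:
  assumes "0 \<le> r" "0 \<le> t" "t \<le> t'"
  shows "D r t \<le> D r t'"
proof -
  have rtB: "r * t * B \<le> r * t' * B"
    using assms B_nonneg by (intro mult_right_mono mult_left_mono) auto
  have tN: "t\<^sup>2 * N \<le> t'\<^sup>2 * N" using assms N_nonneg by (intro mult_right_mono power_mono) auto
  have X: "0 \<le> r\<^sup>2 * P + r * t * B" "r\<^sup>2 * P + r * t * B \<le> r\<^sup>2 * P + r * t' * B"
    using assms P_nonneg B_nonneg rtB by auto
  have Y: "0 \<le> r\<^sup>2 * P + 2 * r * t * B + t\<^sup>2 * N"
    "r\<^sup>2 * P + 2 * r * t * B + t\<^sup>2 * N \<le> r\<^sup>2 * P + 2 * r * t' * B + t'\<^sup>2 * N"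
    using assms P_nonneg B_nonneg N_nonneg rtB tN by auto
  have "a * (r\<^sup>2 * P + r * t * B) \<le> a * (r\<^sup>2 * P + r * t' * B)"
    using X(2) a_pos by (intro mult_left_mono) auto
  moreover have "b * (r\<^sup>2 * P + 2 * r * t * B + t\<^sup>2 * N) * (r\<^sup>2 * P + r * t * B)
      \<le> b * (r\<^sup>2 * P + 2 * r * t' * B + t'\<^sup>2 * N) * (r\<^sup>2 * P + r * t' * B)"
    using X Y b_pos by (intro mult_mono mult_left_mono) auto
  ultimately show ?thesis unfolding fiber_poly_def by simp
qed

lemma fiber_poly_scale_up:
  assumes l: "1 < l" and r0: "0 < r0" and t0: "0 < t0" and t: "0 \<le> t" "t \<le> l * t0"
  shows "D (l * r0) t < l ^ 4 * D r0 t0"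
proof -
  define A where "A = a * (r0\<^sup>2 * P + r0 * t0 * B) + r0\<^sup>2 * H"
  define Q where "Q = b * (r0\<^sup>2 * P + 2 * r0 * t0 * B + t0\<^sup>2 * N) * (r0\<^sup>2 * P + r0 * t0 * B)"
  have A: "0 < A" unfolding A_def using a_pos P_nonneg B_nonneg H_pos r0 t0 by (auto intro: add_nonneg_pos)
  have "D (l * r0) t \<le> D (l * r0) (l * t0)" using l r0 t by (intro fiber_poly_mono) auto
  also have "\<dots> = l\<^sup>2 * A + l ^ 4 * Q" unfolding fiber_poly_scale A_def Q_def ..
  also have "\<dots> < l ^ 4 * A + l ^ 4 * Q"
    using A l power_strict_increasing[of 2 4 l] by (intro add_strict_right_mono mult_strict_right_mono) auto
  also have "\<dots> = l ^ 4 * D r0 t0" unfolding A_def Q_def fiber_poly_def by (simp add: algebra_simps)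
  finally show ?thesis .
qed

lemma fiber_poly_scale_down:
  assumes m: "0 < m" "m < 1" and r0: "0 < r0" and t0: "0 < t0" and t: "m * t0 \<le> t"
  shows "m ^ 4 * D r0 t0 < D (m * r0) t"
proof -
  define A where "A = a * (r0\<^sup>2 * P + r0 * t0 * B) + r0\<^sup>2 * H"
  define Q where "Q = b * (r0\<^sup>2 * P + 2 * r0 * t0 * B + t0\<^sup>2 * N) * (r0\<^sup>2 * P + r0 * t0 * B)"
  have A: "0 < A" unfolding A_def using a_pos P_nonneg B_nonneg H_pos r0 t0 by (auto intro: add_nonneg_pos)
  have "m ^ 4 * D r0 t0 = m ^ 4 * A + m ^ 4 * Q" unfolding A_def Q_def fiber_poly_def by (simp add: algebra_simps)
  also have "\<dots> < m\<^sup>2 * A + m ^ 4 * Q"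
    using A m power_strict_decreasing[of 2 4 m] by (intro add_strict_right_mono mult_strict_right_mono) auto
  also have "\<dots> = D (m * r0) (m * t0)" unfolding fiber_poly_scale A_def Q_def ..
  also have "\<dots> \<le> D (m * r0) t" using m r0 t0 t by (intro fiber_poly_mono) auto
  finally show ?thesis .
qed

text \<open>Scaling by \<open>l > 1\<close> multiplies the polynomial part by at most \<open>l\<^sup>4\<close>, but the nonlinear
  part by \<open>l\<^sup>p \<ge> l\<^sup>4\<close> with a strictly larger logarithm; so a solution cannot lie beyond a
  subsolution in the direction of its larger ratio.\<close>

lemma solution_le_subsolution:
  assumes sub: "F r0 t0 \<le> 0" and sol: "F r t = 0" and pos: "0 < r0" "0 < t0" "0 < t"
    and dominant: "t / t0 \<le> r / r0"
  shows "r \<le> r0 \<and> t \<le> t0"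
proof -
  define l where "l = r / r0"
  have r: "r = l * r0" unfolding l_def using pos by simp
  have t: "t \<le> l * t0" using dominant pos unfolding l_def by (simp add: field_simps)
  have "\<not> 1 < l"
  proof
    assume l: "1 < l"
    define X where "X = 2 * ln r * L + G"
    define X0 where "X0 = 2 * ln r0 * L + G"
    have "r0 < r" unfolding r using l pos by simp
    hence "X0 < X" unfolding X_def X0_def using pos L_pos by (auto intro!: mult_strict_right_mono)
    have sol': "D r t = r powr p * X" using sol unfolding fiber_eq_def X_def by simp
    have "0 < r powr p * X" using fiber_poly_pos[of r t] sol' pos r l by simp
    hence X: "0 < X" using pos r l by (simp add: zero_less_mult_iff)
    have "l ^ 4 * (r0 powr p * X) \<le> l powr p * (r0 powr p * X)"
      using power_le_powr[of l 4 p] l p_ge_4 X pos by (intro mult_right_mono) auto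
    also have "\<dots> = D r t" using sol' l pos unfolding r by (simp add: powr_mult)
    also have "\<dots> < l ^ 4 * D r0 t0" unfolding r by (rule fiber_poly_scale_up[OF l pos(1,2)]) (use t pos in auto)
    also have "\<dots> \<le> l ^ 4 * (r0 powr p * X0)"
      using sub l unfolding fiber_eq_def X0_def by (intro mult_left_mono) auto
    finally have "X < X0" using l pos by (simp add: mult_less_cancel_left_pos)
    thus False using \<open>X0 < X\<close> by simp
  qed
  hence "l * r0 \<le> r0" "l * t0 \<le> t0" using pos by (simp_all add: mult_le_cancel_right1)
  thus ?thesis using r t by simp
qed

lemma solution_ge_solution:
  assumes sol0: "F r0 t0 = 0" and sol: "F r t = 0" and pos: "0 < r0" "0 < t0" "0 < r"
    and dominant: "r / r0 \<le> t / t0"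
  shows "r0 \<le> r \<and> t0 \<le> t"
proof -
  define m where "m = r / r0"
  have r: "r = m * r0" unfolding m_def using pos by simp
  have t: "m * t0 \<le> t" using dominant pos unfolding m_def by (simp add: field_simps)
  have m: "0 < m" unfolding m_def using pos by simp
  have "\<not> m < 1"
  proof
    assume m1: "m < 1"
    define X where "X = 2 * ln r * L + G"
    define X0 where "X0 = 2 * ln r0 * L + G"
    have "r < r0" unfolding r using m m1 pos by simp
    hence "X < X0" unfolding X_def X0_def using pos L_pos by (auto intro!: mult_strict_right_mono)
    have sol0': "D r0 t0 = r0 powr p * X0" using sol0 unfolding fiber_eq_def X0_def by simp
    have "0 < r0 powr p * X0" using fiber_poly_pos[of r0 t0] sol0' pos by simp
    hence X0: "0 < X0" using pos by (simp add: zero_less_mult_iff)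
    have "m ^ 4 * (r0 powr p * X0) < D r t"
      unfolding r sol0'[symmetric] by (rule fiber_poly_scale_down[OF m m1 pos(1,2) t])
    also have "\<dots> = m powr p * (r0 powr p * X)" using sol m pos unfolding r fiber_eq_def X_def by (simp add: powr_mult)
    finally have less: "m ^ 4 * (r0 powr p * X0) < m powr p * (r0 powr p * X)" .
    moreover have "0 < m ^ 4 * (r0 powr p * X0)" using X0 m pos by simp
    ultimately have "0 < m powr p * (r0 powr p * X)" by linarith
    hence "0 < X" using m pos by (simp add: zero_less_mult_iff)
    hence "m powr p * (r0 powr p * X) \<le> m ^ 4 * (r0 powr p * X)"
      using powr_le_power[of m 4 p] m m1 p_ge_4 pos by (intro mult_right_mono) auto
    with less have "m ^ 4 * (r0 powr p * X0) < m ^ 4 * (r0 powr p * X)" by linarith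
    hence "X0 < X" using m pos by (simp add: mult_less_cancel_left_pos)
    thus False using \<open>X < X0\<close> by simp
  qed
  hence "r0 \<le> m * r0" "t0 \<le> m * t0" using pos by (simp_all add: mult_le_cancel_right1)
  thus ?thesis using r t by simp
qed

lemma fiber_eq_pos_near_zero: "\<exists>d0>0. \<forall>d t. 0 < d \<and> d \<le> d0 \<and> 0 \<le> t \<longrightarrow> 0 < F d t"
proof (intro exI[of _ "min 1 (H / (\<bar>G\<bar> + 1))"] conjI allI impI)
  show "0 < min 1 (H / (\<bar>G\<bar> + 1))" using H_pos by simp
  fix d t :: real assume d: "0 < d \<and> d \<le> min 1 (H / (\<bar>G\<bar> + 1)) \<and> 0 \<le> t"
  have "d * \<bar>G\<bar> \<le> H / (\<bar>G\<bar> + 1) * \<bar>G\<bar>" using d by (intro mult_right_mono) auto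
  also have "\<dots> < H" using H_pos by (simp add: field_simps)
  finally have dG: "d * \<bar>G\<bar> < H" .
  have "d powr (p - 2) \<le> d powr 1" using d p_ge_4 by (intro powr_mono') auto
  hence d_powr: "d powr (p - 2) \<le> d" using d by simp
  have "d powr p = d powr 2 * d powr (p - 2)" by (simp add: powr_add[symmetric])
  hence d_split: "d powr p = d\<^sup>2 * d powr (p - 2)" using d by simp
  have "2 * ln d * L \<le> 0" using d L_pos by (simp add: mult_nonpos_nonneg)
  hence "2 * ln d * L + G \<le> \<bar>G\<bar>" by linarith
  hence "d powr p * (2 * ln d * L + G) \<le> d powr p * \<bar>G\<bar>" by (rule mult_left_mono) simp
  also have "\<dots> = d\<^sup>2 * (d powr (p - 2) * \<bar>G\<bar>)" unfolding d_split by (simp only: mult.assoc)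
  also have "\<dots> \<le> d\<^sup>2 * (d * \<bar>G\<bar>)" using d_powr by (intro mult_left_mono mult_right_mono) auto
  also have "\<dots> < d\<^sup>2 * H" using d dG by (intro mult_strict_left_mono) auto
  also have "\<dots> \<le> D d t"
    unfolding fiber_poly_def using a_pos b_pos P_nonneg N_nonneg B_nonneg d
    by (auto intro!: add_nonneg_nonneg mult_nonneg_nonneg)
  finally show "0 < F d t" unfolding fiber_eq_def by simp
qed

lemma fiber_eq_neg_far_out: "\<exists>R0\<ge>1. \<forall>R t. R0 \<le> R \<and> 0 \<le> t \<and> t \<le> R \<longrightarrow> F R t < 0"
proof -
  define A where "A = a * (P + B) + H"
  define Q where "Q = A + b * (P + 2 * B + N) * (P + B)"
  define R0 where "R0 = exp ((Q + \<bar>G\<bar>) / (2 * L) + 1)"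
  have A: "0 \<le> A" unfolding A_def using a_pos P_nonneg B_nonneg H_pos by auto
  have Q: "0 \<le> Q" unfolding Q_def using A b_pos P_nonneg N_nonneg B_nonneg by auto
  have R0: "1 \<le> R0" unfolding R0_def using Q L_pos by simp
  have "F R t < 0" if R: "R0 \<le> R" and t: "0 \<le> t" "t \<le> R" for R t
  proof -
    have R1: "1 \<le> R" using R0 R by simp
    have "Q + \<bar>G\<bar> < 2 * ln R0 * L" unfolding R0_def using L_pos by (simp add: field_simps)
    also have "\<dots> \<le> 2 * ln R * L" using R R0 L_pos by simp
    finally have Q_less: "Q < 2 * ln R * L + G" by linarith
    have "D R t \<le> D R R" by (rule fiber_poly_mono) (use t R1 in auto)
    also have "\<dots> = R\<^sup>2 * A + R ^ 4 * (b * (P + 2 * B + N) * (P + B))"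
      using fiber_poly_scale[of a b P N B H R 1 1] by (simp add: A_def)
    also have "\<dots> \<le> R ^ 4 * A + R ^ 4 * (b * (P + 2 * B + N) * (P + B))"
      using R1 power_increasing[of 2 4 R] A by (intro add_right_mono mult_right_mono) auto
    also have "\<dots> = R ^ 4 * Q" unfolding Q_def by (simp add: distrib_left)
    also have "\<dots> < R ^ 4 * (2 * ln R * L + G)" using Q_less R1 by simp
    also have "\<dots> \<le> R powr p * (2 * ln R * L + G)"
      using power_le_powr[of R 4 p] R1 p_ge_4 Q Q_less by (intro mult_right_mono) auto
    finally show ?thesis unfolding fiber_eq_def by simp
  qed
  thus ?thesis using R0 by blast
qed

lemma continuous_on_fiber_eq:
  assumes "continuous_on S r" "continuous_on S t" "\<And>z. z \<in> S \<Longrightarrow> 0 < r z"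
  shows "continuous_on S (\<lambda>z. F (r z) (t z))"
proof -
  have "\<forall>z\<in>S. r z \<noteq> 0" using assms(3) by force
  thus ?thesis unfolding fiber_eq_def fiber_poly_def by (intro continuous_intros assms(1,2)) auto
qed

end

text \<open>Brouwer's theorem applied to \<open>(r, t) \<mapsto> (r + f r t, t + g r t)\<close> clamped to the square.\<close>

lemma poincare_miranda_square:
  fixes f g :: "real \<Rightarrow> real \<Rightarrow> real"
  assumes dR: "d \<le> R"
    and cont: "continuous_on ({d..R} \<times> {d..R}) (\<lambda>z. f (fst z) (snd z))"
      "continuous_on ({d..R} \<times> {d..R}) (\<lambda>z. g (fst z) (snd z))"
    and f_sides: "\<And>t. t \<in> {d..R} \<Longrightarrow> 0 < f d t" "\<And>t. t \<in> {d..R} \<Longrightarrow> f R t < 0"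
    and g_sides: "\<And>r. r \<in> {d..R} \<Longrightarrow> 0 < g r d" "\<And>r. r \<in> {d..R} \<Longrightarrow> g r R < 0"
  shows "\<exists>r\<in>{d..R}. \<exists>t\<in>{d..R}. f r t = 0 \<and> g r t = 0"
proof -
  define S where "S = {d..R} \<times> {d..R}"
  define clamp where "clamp = (\<lambda>x::real. max d (min R x))"
  define \<phi> where "\<phi> = (\<lambda>z. (clamp (fst z + f (fst z) (snd z)), clamp (snd z + g (fst z) (snd z))))"
  have "continuous_on S \<phi>" unfolding \<phi>_def clamp_def S_def by (intro continuous_intros cont)
  moreover have "\<phi> \<in> S \<rightarrow> S" unfolding \<phi>_def clamp_def S_def using dR by auto
  moreover have "compact S" "convex S" "S \<noteq> {}"
    unfolding S_def using dR by (auto intro: compact_Times convex_Times)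
  ultimately obtain z where "z \<in> S" "\<phi> z = z" using brouwer[of S \<phi>] by blast
  then obtain r t where rt: "r \<in> {d..R}" "t \<in> {d..R}" and fixed: "\<phi> (r, t) = (r, t)"
    unfolding S_def by (cases z) auto
  have clamp_fixed: "y = 0" if "x \<in> {d..R}" "clamp (x + y) = x" "x = d \<Longrightarrow> 0 < y" "x = R \<Longrightarrow> y < 0"
    for x y using that by (auto simp: clamp_def max_def min_def split: if_splits)
  have "f r t = 0" using fixed rt f_sides by (intro clamp_fixed[of r]) (auto simp: \<phi>_def)
  moreover have "g r t = 0" using fixed rt g_sides by (intro clamp_fixed[of t]) (auto simp: \<phi>_def)
  ultimately show ?thesis using rt by blast
qed

lemma fiber_system_solvable:
  assumes S1: "fiber_coeffs a b p P N B Hp Lp" and S2: "fiber_coeffs a b p N P B Hm Lm"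
  shows "\<exists>r t. 0 < r \<and> 0 < t \<and> fiber_eq a b p P N B Hp Lp Gp r t = 0 \<and> fiber_eq a b p N P B Hm Lm Gm t r = 0"
proof -
  obtain d1 d2 where d: "0 < d1" "0 < d2"
    and near_zero: "\<And>d t. 0 < d \<Longrightarrow> d \<le> d1 \<Longrightarrow> 0 \<le> t \<Longrightarrow> 0 < fiber_eq a b p P N B Hp Lp Gp d t"
      "\<And>d t. 0 < d \<Longrightarrow> d \<le> d2 \<Longrightarrow> 0 \<le> t \<Longrightarrow> 0 < fiber_eq a b p N P B Hm Lm Gm d t"
    using fiber_coeffs.fiber_eq_pos_near_zero[OF S1, of Gp] fiber_coeffs.fiber_eq_pos_near_zero[OF S2, of Gm]
    by metis
  obtain R1 R2 where R: "1 \<le> R1" "1 \<le> R2"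
    and far_out: "\<And>R t. R1 \<le> R \<Longrightarrow> 0 \<le> t \<Longrightarrow> t \<le> R \<Longrightarrow> fiber_eq a b p P N B Hp Lp Gp R t < 0"
      "\<And>R t. R2 \<le> R \<Longrightarrow> 0 \<le> t \<Longrightarrow> t \<le> R \<Longrightarrow> fiber_eq a b p N P B Hm Lm Gm R t < 0"
    using fiber_coeffs.fiber_eq_neg_far_out[OF S1, of Gp] fiber_coeffs.fiber_eq_neg_far_out[OF S2, of Gm]
    by metis
  define \<delta> where "\<delta> = min (min d1 d2) 1"
  define \<rho> where "\<rho> = max R1 R2"
  have \<delta>: "0 < \<delta>" "\<delta> \<le> \<rho>" unfolding \<delta>_def \<rho>_def using d R by auto
  have "\<exists>r\<in>{\<delta>..\<rho>}. \<exists>t\<in>{\<delta>..\<rho>}. fiber_eq a b p P N B Hp Lp Gp r t = 0 \<and> fiber_eq a b p N P B Hm Lm Gm t r = 0"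
  proof (rule poincare_miranda_square[OF \<delta>(2)])
    show "continuous_on ({\<delta>..\<rho>} \<times> {\<delta>..\<rho>}) (\<lambda>z. fiber_eq a b p P N B Hp Lp Gp (fst z) (snd z))"
      "continuous_on ({\<delta>..\<rho>} \<times> {\<delta>..\<rho>}) (\<lambda>z. fiber_eq a b p N P B Hm Lm Gm (snd z) (fst z))"
      using \<delta> by (auto intro!: fiber_coeffs.continuous_on_fiber_eq[OF S1] fiber_coeffs.continuous_on_fiber_eq[OF S2]
          continuous_intros)
  qed (use \<delta> near_zero far_out in \<open>auto simp: \<delta>_def \<rho>_def\<close>)
  then obtain r t where "r \<in> {\<delta>..\<rho>}" "t \<in> {\<delta>..\<rho>}"
    "fiber_eq a b p P N B Hp Lp Gp r t = 0" "fiber_eq a b p N P B Hm Lm Gm t r = 0" by blast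
  thus ?thesis using \<delta> by (intro exI[of _ r] exI[of _ t]) auto
qed

lemma fiber_system_solution_le_subsolution:
  assumes S1: "fiber_coeffs a b p P N B Hp Lp" and S2: "fiber_coeffs a b p N P B Hm Lm"
    and sub: "fiber_eq a b p P N B Hp Lp Gp r0 t0 \<le> 0" "fiber_eq a b p N P B Hm Lm Gm t0 r0 \<le> 0"
    and sol: "fiber_eq a b p P N B Hp Lp Gp r t = 0" "fiber_eq a b p N P B Hm Lm Gm t r = 0"
    and pos: "0 < r0" "0 < t0" "0 < r" "0 < t"
  shows "r \<le> r0 \<and> t \<le> t0"
proof (cases "t / t0 \<le> r / r0")
  case True
  show ?thesis by (rule fiber_coeffs.solution_le_subsolution[OF S1 sub(1) sol(1) pos(1,2,4) True])
next
  case False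
  hence "r / r0 \<le> t / t0" by simp
  thus ?thesis using fiber_coeffs.solution_le_subsolution[OF S2 sub(2) sol(2) pos(2,1,3)] by simp
qed

lemma fiber_system_solution_unique:
  assumes S1: "fiber_coeffs a b p P N B Hp Lp" and S2: "fiber_coeffs a b p N P B Hm Lm"
    and sol0: "fiber_eq a b p P N B Hp Lp Gp r0 t0 = 0" "fiber_eq a b p N P B Hm Lm Gm t0 r0 = 0"
    and sol: "fiber_eq a b p P N B Hp Lp Gp r t = 0" "fiber_eq a b p N P B Hm Lm Gm t r = 0"
    and pos: "0 < r0" "0 < t0" "0 < r" "0 < t"
  shows "r = r0 \<and> t = t0"
proof -
  have "r \<le> r0 \<and> t \<le> t0"
    by (rule fiber_system_solution_le_subsolution[OF S1 S2 _ _ sol pos]) (use sol0 in simp_all)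
  moreover have "r0 \<le> r \<and> t0 \<le> t"
  proof (cases "r / r0 \<le> t / t0")
    case True
    show ?thesis by (rule fiber_coeffs.solution_ge_solution[OF S1 sol0(1) sol(1) pos(1,2,3) True])
  next
    case False
    hence "t / t0 \<le> r / r0" by simp
    thus ?thesis using fiber_coeffs.solution_ge_solution[OF S2 sol0(2) sol(2) pos(2,1,4)] by simp
  qed
  ultimately show ?thesis by simp
qed

lemma fiber_system_unique_solution_le_one:
  assumes S1: "fiber_coeffs a b p P N B Hp Lp" and S2: "fiber_coeffs a b p N P B Hm Lm"
    and at_one: "fiber_eq a b p P N B Hp Lp Gp 1 1 \<le> 0" "fiber_eq a b p N P B Hm Lm Gm 1 1 \<le> 0"
  shows "(\<exists>!rt::real \<times> real. 0 < fst rt \<and> 0 < snd rt \<and>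
            fiber_eq a b p P N B Hp Lp Gp (fst rt) (snd rt) = 0 \<and>
            fiber_eq a b p N P B Hm Lm Gm (snd rt) (fst rt) = 0)
       \<and> (\<forall>r t. 0 < r \<and> 0 < t \<and> fiber_eq a b p P N B Hp Lp Gp r t = 0 \<and>
            fiber_eq a b p N P B Hm Lm Gm t r = 0 \<longrightarrow> r \<le> 1 \<and> t \<le> 1)"
proof
  obtain r0 t0 where pos0: "0 < r0" "0 < t0" and
    sol0: "fiber_eq a b p P N B Hp Lp Gp r0 t0 = 0" "fiber_eq a b p N P B Hm Lm Gm t0 r0 = 0"
    using fiber_system_solvable[OF S1 S2] by blast
  show "\<exists>!rt::real \<times> real. 0 < fst rt \<and> 0 < snd rt \<and>
            fiber_eq a b p P N B Hp Lp Gp (fst rt) (snd rt) = 0 \<and>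
            fiber_eq a b p N P B Hm Lm Gm (snd rt) (fst rt) = 0"
  proof (rule ex1I[of _ "(r0, t0)"])
    fix rt :: "real \<times> real"
    assume "0 < fst rt \<and> 0 < snd rt \<and> fiber_eq a b p P N B Hp Lp Gp (fst rt) (snd rt) = 0 \<and>
      fiber_eq a b p N P B Hm Lm Gm (snd rt) (fst rt) = 0"
    hence "fst rt = r0 \<and> snd rt = t0"
      using fiber_system_solution_unique[OF S1 S2 sol0 _ _ pos0] by blast
    thus "rt = (r0, t0)" by (simp add: prod_eq_iff)
  qed (use pos0 sol0 in simp)
next
  show "\<forall>r t. 0 < r \<and> 0 < t \<and> fiber_eq a b p P N B Hp Lp Gp r t = 0 \<and>
            fiber_eq a b p N P B Hm Lm Gm t r = 0 \<longrightarrow> r \<le> 1 \<and> t \<le> 1"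
  proof (intro allI impI)
    fix r t :: real
    assume "0 < r \<and> 0 < t \<and> fiber_eq a b p P N B Hp Lp Gp r t = 0 \<and> fiber_eq a b p N P B Hm Lm Gm t r = 0"
    thus "r \<le> 1 \<and> t \<le> 1"
      by (intro fiber_system_solution_le_subsolution[OF S1 S2 at_one]) auto
  qed
qed

section \<open>The Nehari conditions along the fiber of a sign-changing function\<close>

context summable_weight
begin

text \<open>On disjointly supported \<open>f\<close>, \<open>g\<close> the pairing \<open>\<langle>J'(r f + t g), r f\<rangle>\<close> only sees \<open>f\<close> in the
  potential and nonlinear terms, which is what reduces it to a scalar function of \<open>(r, t)\<close>.\<close>

lemma Jder_disjoint_lincomb:
  assumes f: "l2 f" and g: "l2 g" and disjoint: "\<And>x. f x * g x = 0"
    and hf: "(\<lambda>x. h x * (f x)\<^sup>2) summable_on UNIV" and r: "0 < r" and p: "3 \<le> p"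
  shows "Jder a b p w h (\<lambda>x. r * f x + t * g x) (\<lambda>x. r * f x) =
    fiber_eq a b p (grad_norm_sq w f) (grad_norm_sq w g) (infsum (\<lambda>x. grad_prod w f g x) UNIV)
      (infsum (\<lambda>x. h x * (f x)\<^sup>2) UNIV) (infsum (\<lambda>x. \<bar>f x\<bar> powr p) UNIV)
      (infsum (\<lambda>x. \<bar>f x\<bar> powr p * ln ((f x)\<^sup>2)) UNIV) r t"
proof -
  define v where "v = (\<lambda>x. r * f x + t * g x)"
  define Pf where "Pf = grad_norm_sq w f"
  define Bq where "Bq = infsum (\<lambda>x. grad_prod w f g x) UNIV"
  define Hf where "Hf = infsum (\<lambda>x. h x * (f x)\<^sup>2) UNIV"
  define Lf where "Lf = infsum (\<lambda>x. \<bar>f x\<bar> powr p) UNIV"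
  define Gf where "Gf = infsum (\<lambda>x. \<bar>f x\<bar> powr p * ln ((f x)\<^sup>2)) UNIV"
  have grad: "infsum (\<lambda>x. grad_prod w v (\<lambda>x. r * f x) x) UNIV = r\<^sup>2 * Pf + r * t * Bq"
    unfolding v_def Pf_def Bq_def by (rule infsum_grad_prod_lincomb_cmult[OF f g])
  have potential_pointwise: "h x * v x * (r * f x) = r\<^sup>2 * (h x * (f x)\<^sup>2)" for x
    unfolding v_def using disjoint[of x] by (auto simp: power2_eq_square algebra_simps)
  have linear: "infsum (\<lambda>x. a * grad_prod w v (\<lambda>x. r * f x) x + h x * v x * (r * f x)) UNIV
      = a * (r\<^sup>2 * Pf + r * t * Bq) + r\<^sup>2 * Hf"
  proof -
    have "l2 (\<lambda>x. r * f x)" using f unfolding l2_def by (simp add: power_mult_distrib summable_on_cmult_right)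
    hence "(\<lambda>x. a * grad_prod w v (\<lambda>x. r * f x) x) summable_on UNIV"
      unfolding v_def by (intro summable_on_cmult_right grad_prod_summable l2_lincomb f g)
    moreover have "(\<lambda>x. h x * v x * (r * f x)) summable_on UNIV"
      unfolding potential_pointwise by (intro summable_on_cmult_right hf)
    ultimately show ?thesis
      by (simp add: infsum_add potential_pointwise grad infsum_cmult_right' Hf_def)
  qed
  have "(\<lambda>x. logterm p (v x) * (r * f x)) = (\<lambda>x. logterm p (r * f x) * (r * f x))"
    unfolding v_def using disjoint by (force simp: fun_eq_iff)
  hence log: "infsum (\<lambda>x. logterm p (v x) * (r * f x)) UNIV = r powr p * (2 * ln r * Lf + Gf)"
    unfolding Lf_def Gf_def using infsum_logterm_cmult[OF f r p] by simp
  show ?thesis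
    unfolding Jder_def v_def[symmetric] linear grad log grad_norm_sq_lincomb[OF f g, of r t, folded v_def]
    unfolding fiber_eq_def fiber_poly_def Pf_def Bq_def Hf_def Lf_def Gf_def ..
qed

end

lemma pos_part_mult_neg_part: "pos_part u x * neg_part u x = 0"
  unfolding pos_part_def neg_part_def by (auto simp: max_def min_def)

lemma pos_part_add_neg_part: "(\<lambda>x. pos_part u x + neg_part u x) = u"
  unfolding pos_part_def neg_part_def by (auto simp: max_def min_def)

lemma abs_pos_part_le: "\<bar>pos_part u x\<bar> \<le> \<bar>u x\<bar>" and abs_neg_part_le: "\<bar>neg_part u x\<bar> \<le> \<bar>u x\<bar>"
  unfolding pos_part_def neg_part_def by (auto simp: max_def min_def)

lemma pos_part_lincomb:
  assumes "0 < r" "0 < t"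
  shows "pos_part (\<lambda>x. r * pos_part u x + t * neg_part u x) = (\<lambda>x. r * pos_part u x)"
  using assms unfolding pos_part_def neg_part_def
  by (auto simp: fun_eq_iff max_def min_def zero_le_mult_iff mult_le_0_iff)

lemma neg_part_lincomb:
  assumes "0 < r" "0 < t"
  shows "neg_part (\<lambda>x. r * pos_part u x + t * neg_part u x) = (\<lambda>x. t * neg_part u x)"
  using assms unfolding pos_part_def neg_part_def
  by (auto simp: fun_eq_iff max_def min_def zero_le_mult_iff mult_le_0_iff)

lemma pos_neg_part_increments_nonneg: "0 \<le> (pos_part u x - pos_part u y) * (neg_part u x - neg_part u y)"
  unfolding pos_part_def neg_part_def
  by (cases "0 \<le> u x"; cases "0 \<le> u y")
    (auto simp: max_def min_def mult_nonneg_nonneg mult_nonpos_nonpos mult_nonneg_nonpos mult_nonpos_nonneg)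

locale sign_changing_fiber = summable_weight w M C
  for w :: "('d::finite \<Rightarrow> int) \<Rightarrow> ('d \<Rightarrow> int) \<Rightarrow> real" and M C +
  fixes a b p :: real and h u :: "('d \<Rightarrow> int) \<Rightarrow> real"
  assumes a_pos: "0 < a" and b_pos: "0 < b" and p_ge_4: "4 \<le> p"
    and h_pos: "\<And>x. 0 < h x"
    and u_l2: "l2 u" and u_weighted: "(\<lambda>x. h x * (u x)\<^sup>2) summable_on UNIV"
    and pos_part_nonzero: "pos_part u \<noteq> (\<lambda>_. 0)" and neg_part_nonzero: "neg_part u \<noteq> (\<lambda>_. 0)"
begin

definition "grad_pos = grad_norm_sq w (pos_part u)"
definition "grad_neg = grad_norm_sq w (neg_part u)"
definition "grad_mixed = infsum (\<lambda>x. grad_prod w (pos_part u) (neg_part u) x) UNIV"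
definition "mass_pos = infsum (\<lambda>x. h x * (pos_part u x)\<^sup>2) UNIV"
definition "mass_neg = infsum (\<lambda>x. h x * (neg_part u x)\<^sup>2) UNIV"
definition "lp_pos = infsum (\<lambda>x. \<bar>pos_part u x\<bar> powr p) UNIV"
definition "lp_neg = infsum (\<lambda>x. \<bar>neg_part u x\<bar> powr p) UNIV"
definition "log_pos = infsum (\<lambda>x. \<bar>pos_part u x\<bar> powr p * ln ((pos_part u x)\<^sup>2)) UNIV"
definition "log_neg = infsum (\<lambda>x. \<bar>neg_part u x\<bar> powr p * ln ((neg_part u x)\<^sup>2)) UNIV"

lemma l2_pos_part: "l2 (pos_part u)" and l2_neg_part: "l2 (neg_part u)"
  by (rule l2_dominated[OF u_l2 abs_pos_part_le[of u]], rule l2_dominated[OF u_l2 abs_neg_part_le[of u]])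

lemma weighted_pos_part_summable: "(\<lambda>x. h x * (pos_part u x)\<^sup>2) summable_on UNIV"
  and weighted_neg_part_summable: "(\<lambda>x. h x * (neg_part u x)\<^sup>2) summable_on UNIV"
  using h_pos abs_pos_part_le[of u] abs_neg_part_le[of u]
  by (auto intro!: summable_on_comparison_test[OF u_weighted] mult_left_mono simp: abs_le_square_iff less_imp_le)

lemma Jder_pos_part:
  assumes "0 < r"
  shows "Jder a b p w h (\<lambda>x. r * pos_part u x + t * neg_part u x) (\<lambda>x. r * pos_part u x)
    = fiber_eq a b p grad_pos grad_neg grad_mixed mass_pos lp_pos log_pos r t"
  unfolding grad_pos_def grad_neg_def grad_mixed_def mass_pos_def lp_pos_def log_pos_def
  using p_ge_4 by (intro Jder_disjoint_lincomb l2_pos_part l2_neg_part pos_part_mult_neg_part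
      weighted_pos_part_summable assms) auto

lemma Jder_neg_part:
  assumes "0 < t"
  shows "Jder a b p w h (\<lambda>x. r * pos_part u x + t * neg_part u x) (\<lambda>x. t * neg_part u x)
    = fiber_eq a b p grad_neg grad_pos grad_mixed mass_neg lp_neg log_neg t r"
proof -
  have "(\<lambda>x. r * pos_part u x + t * neg_part u x) = (\<lambda>x. t * neg_part u x + r * pos_part u x)"
    by (simp add: add.commute)
  moreover have "infsum (\<lambda>x. grad_prod w (neg_part u) (pos_part u) x) UNIV = grad_mixed"
    unfolding grad_mixed_def by (simp add: grad_prod_commute[of w "neg_part u"])
  moreover have "neg_part u x * pos_part u x = 0" for x
    using pos_part_mult_neg_part[of u x] by (simp add: mult.commute)
  ultimately show ?thesis
    unfolding grad_pos_def grad_neg_def mass_neg_def lp_neg_def log_neg_def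
    using Jder_disjoint_lincomb[OF l2_neg_part l2_pos_part _ weighted_neg_part_summable assms,
        where a=a and b=b and p=p and t=r] p_ge_4 by simp
qed

lemma grad_mixed_nonneg: "0 \<le> grad_mixed"
proof -
  have "0 \<le> w x y * (pos_part u x - pos_part u y) * (neg_part u x - neg_part u y)" if "y \<in> UNIV - {x}" for x y
    using that weight_nonneg[of x y] pos_neg_part_increments_nonneg[of u x y] by (simp add: mult.assoc)
  thus ?thesis
    unfolding grad_mixed_def grad_prod_def
    by (intro infsum_nonneg) (rule mult_nonneg_nonneg, simp, rule infsum_nonneg, blast)
qed

lemma fiber_coeffs_pos: "fiber_coeffs a b p grad_pos grad_neg grad_mixed mass_pos lp_pos"
  and fiber_coeffs_neg: "fiber_coeffs a b p grad_neg grad_pos grad_mixed mass_neg lp_neg"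
proof -
  obtain x1 where x1: "pos_part u x1 \<noteq> 0" using pos_part_nonzero by auto
  obtain x2 where x2: "neg_part u x2 \<noteq> 0" using neg_part_nonzero by auto
  have h_nonneg: "0 \<le> h x" for x using h_pos[of x] by simp
  have "0 < mass_pos" unfolding mass_pos_def
    by (rule infsum_pos_of_pos_point[OF weighted_pos_part_summable, of x1]) (use h_nonneg h_pos x1 in auto)
  moreover have "0 < mass_neg" unfolding mass_neg_def
    by (rule infsum_pos_of_pos_point[OF weighted_neg_part_summable, of x2]) (use h_nonneg h_pos x2 in auto)
  moreover have "0 < lp_pos" "0 < lp_neg" unfolding lp_pos_def lp_neg_def
    using x1 x2 p_ge_4 by (auto intro!: infsum_pos_of_pos_point l2_powr_summable(1) l2_pos_part l2_neg_part)
  moreover have "0 \<le> grad_pos" "0 \<le> grad_neg" unfolding grad_pos_def grad_neg_def grad_norm_sq_def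
    by (intro infsum_nonneg grad_prod_self_nonneg)+
  ultimately show "fiber_coeffs a b p grad_pos grad_neg grad_mixed mass_pos lp_pos"
    "fiber_coeffs a b p grad_neg grad_pos grad_mixed mass_neg lp_neg"
    unfolding fiber_coeffs_def using a_pos b_pos p_ge_4 grad_mixed_nonneg by auto
qed

lemma lincomb_in_H_space: "(\<lambda>x. r * pos_part u x + t * neg_part u x) \<in> H_space w h"
proof (rule l2_in_H_space)
  show "l2 (\<lambda>x. r * pos_part u x + t * neg_part u x)" by (intro l2_lincomb l2_pos_part l2_neg_part)
  have "h x * (r * pos_part u x + t * neg_part u x)\<^sup>2
      = r\<^sup>2 * (h x * (pos_part u x)\<^sup>2) + t\<^sup>2 * (h x * (neg_part u x)\<^sup>2)" for x
    using pos_part_mult_neg_part[of u x] by (auto simp: power2_eq_square algebra_simps)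
  moreover have "(\<lambda>x. r\<^sup>2 * (h x * (pos_part u x)\<^sup>2) + t\<^sup>2 * (h x * (neg_part u x)\<^sup>2)) summable_on UNIV"
    by (intro summable_on_add summable_on_cmult_right weighted_pos_part_summable weighted_neg_part_summable)
  ultimately show "(\<lambda>x. h x * (r * pos_part u x + t * neg_part u x)\<^sup>2) summable_on UNIV" by simp
qed

lemma lincomb_in_M_set_iff:
  "(0 < r \<and> 0 < t \<and> (\<lambda>x. r * pos_part u x + t * neg_part u x) \<in> M_set a b p w h) \<longleftrightarrow>
   (0 < r \<and> 0 < t \<and> fiber_eq a b p grad_pos grad_neg grad_mixed mass_pos lp_pos log_pos r t = 0 \<and>
      fiber_eq a b p grad_neg grad_pos grad_mixed mass_neg lp_neg log_neg t r = 0)"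
proof (cases "0 < r \<and> 0 < t")
  case True
  define v where "v = (\<lambda>x. r * pos_part u x + t * neg_part u x)"
  have pos: "pos_part v = (\<lambda>x. r * pos_part u x)" and neg: "neg_part v = (\<lambda>x. t * neg_part u x)"
    unfolding v_def using True by (simp_all add: pos_part_lincomb neg_part_lincomb)
  have "pos_part v \<noteq> (\<lambda>_. 0)" "neg_part v \<noteq> (\<lambda>_. 0)"
    unfolding pos neg using True pos_part_nonzero neg_part_nonzero by (auto simp: fun_eq_iff)
  hence "v \<in> M_set a b p w h \<longleftrightarrow> Jder a b p w h v (pos_part v) = 0 \<and> Jder a b p w h v (neg_part v) = 0"
    unfolding M_set_def using lincomb_in_H_space[of r t] by (simp add: v_def)
  also have "\<dots> \<longleftrightarrow> fiber_eq a b p grad_pos grad_neg grad_mixed mass_pos lp_pos log_pos r t = 0 \<and>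
      fiber_eq a b p grad_neg grad_pos grad_mixed mass_neg lp_neg log_neg t r = 0"
    unfolding pos neg using Jder_pos_part[of r t] Jder_neg_part[of t r] True by (simp add: v_def)
  finally show ?thesis using True by (simp add: v_def)
qed auto

lemma Jder_at_one:
  "Jder a b p w h u (pos_part u) = fiber_eq a b p grad_pos grad_neg grad_mixed mass_pos lp_pos log_pos 1 1"
  "Jder a b p w h u (neg_part u) = fiber_eq a b p grad_neg grad_pos grad_mixed mass_neg lp_neg log_neg 1 1"
  using Jder_pos_part[of 1 1] Jder_neg_part[of 1 1] by (simp_all add: pos_part_add_neg_part)

end

text \<open>Of the hypotheses \<open>0 < s < 1\<close> and \<open>p > 6\<close> the proof only uses \<open>s > 0\<close> and \<open>p \<ge> 4\<close>.\<close>

theorem mainTheorem15: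
  fixes s a b p :: real
    and w :: "('d::finite \<Rightarrow> int) \<Rightarrow> ('d \<Rightarrow> int) \<Rightarrow> real"
    and h :: "('d \<Rightarrow> int) \<Rightarrow> real"
    and u :: "('d \<Rightarrow> int) \<Rightarrow> real"
  assumes s: "0 < s" "s < 1"
    and w: "admissible_weight s w"
    and ab: "0 < a" "0 < b"
    and p: "6 < p"
    and h1: "\<exists>h0>0. \<forall>x. h0 \<le> h x"
    and uH: "u \<in> H_space w h"
    and upos: "pos_part u \<noteq> (\<lambda>_. 0)"
    and uneg: "neg_part u \<noteq> (\<lambda>_. 0)"
    and Jpos: "Jder a b p w h u (pos_part u) \<le> 0"
    and Jneg: "Jder a b p w h u (neg_part u) \<le> 0"
  shows "(\<exists>!rt::real \<times> real. 0 < fst rt \<and> 0 < snd rt \<and>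
            (\<lambda>x. fst rt * pos_part u x + snd rt * neg_part u x) \<in> M_set a b p w h) \<and>
         (\<forall>r t. 0 < r \<and> 0 < t \<and>
            (\<lambda>x. r * pos_part u x + t * neg_part u x) \<in> M_set a b p w h
            \<longrightarrow> r \<le> 1 \<and> t \<le> 1)"
proof -
  obtain M C where "summable_weight w M C" using admissible_weight_summable_weight[OF w s(1)] .
  moreover have "0 < h x" for x using h1 by (meson less_le_trans)
  moreover have "l2 u" "(\<lambda>x. h x * (u x)\<^sup>2) summable_on UNIV"
    using uH unfolding H_space_def W_space_def l2_def by auto
  ultimately interpret sign_changing_fiber w M C a b p h u
    using ab p upos uneg by (simp add: sign_changing_fiber_def sign_changing_fiber_axioms_def)
  have "fiber_eq a b p grad_pos grad_neg grad_mixed mass_pos lp_pos log_pos 1 1 \<le> 0"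
    "fiber_eq a b p grad_neg grad_pos grad_mixed mass_neg lp_neg log_neg 1 1 \<le> 0"
    using Jpos Jneg unfolding Jder_at_one .
  thus ?thesis
    unfolding lincomb_in_M_set_iff by (rule fiber_system_unique_solution_le_one[OF fiber_coeffs_pos fiber_coeffs_neg])
qed

end
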